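(* $R_A$ is a simple $\mathbb Z^d$-graded $D(R_A)$-module (it has no nonzero proper $\mathbb Z^d$-graded $D(R_A)$-submodules) if and only if $\mathbb Q(A\cap\tau)\cap\mathbb Z^d=\mathbb Z(A\cap\tau)$ for all faces $\tau$ of the cone $\mathbb R_{\ge0}A$.
   Context: $A\subset\mathbb Z^d$ is a finite set generating the group $\mathbb Z^d$; $R_A=\mathbb C[\mathbb NA]=\bigoplus_{\mathbf a\in\mathbb NA}\mathbb Ct^{\mathbf a}\subseteq\mathbb C[t_1^{\pm1},\dots,t_d^{\pm1}]$, graded by $\mathbb Z^d$; $D(R_A)=\{P\in\mathbb C[t^{\pm1}]\langle\partial_1,\dots,\partial_d\rangle:P(R_A)\subseteq R_A\}$, acting on $R_A$. *)

theory Defs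
  imports Complex_Main
begin

(* Lattice points of Z^d: functions 'n => int, 'n a finite index type with d = CARD('n). *)

definition int_span :: "('n \<Rightarrow> int) set \<Rightarrow> ('n \<Rightarrow> int) set" where
  "int_span S = {v. \<exists>c :: ('n \<Rightarrow> int) \<Rightarrow> int. v = (\<lambda>i. \<Sum>a\<in>S. c a * a i)}"

definition nat_span :: "('n \<Rightarrow> int) set \<Rightarrow> ('n \<Rightarrow> int) set" where
  "nat_span S = {v. \<exists>c :: ('n \<Rightarrow> int) \<Rightarrow> nat. v = (\<lambda>i. \<Sum>a\<in>S. int (c a) * a i)}"

definition rat_span_lattice :: "('n \<Rightarrow> int) set \<Rightarrow> ('n \<Rightarrow> int) set" where
  "rat_span_lattice S = {v. \<exists>q :: ('n \<Rightarrow> int) \<Rightarrow> rat.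
        (\<lambda>i. of_int (v i)) = (\<lambda>i. \<Sum>a\<in>S. q a * of_int (a i))}"

definition real_cone :: "('n \<Rightarrow> int) set \<Rightarrow> ('n \<Rightarrow> real) set" where
  "real_cone A = {x. \<exists>l :: ('n \<Rightarrow> int) \<Rightarrow> real. (\<forall>a\<in>A. l a \<ge> 0) \<and>
        x = (\<lambda>i. \<Sum>a\<in>A. l a * of_int (a i))}"

definition is_face :: "('n::finite \<Rightarrow> real) set \<Rightarrow> ('n \<Rightarrow> real) set \<Rightarrow> bool" where
  "is_face C \<tau> \<longleftrightarrow> (\<exists>w :: 'n \<Rightarrow> real. (\<forall>x\<in>C. (\<Sum>i\<in>UNIV. w i * x i) \<ge> 0) \<and>
        \<tau> = {x\<in>C. (\<Sum>i\<in>UNIV. w i * x i) = 0})"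

definition real_pt :: "('n \<Rightarrow> int) \<Rightarrow> ('n \<Rightarrow> real)" where
  "real_pt a = (\<lambda>i. of_int (a i))"

(* Laurent polynomials C[t^{+-1}]: finitely supported coefficient functions Z^d -> C *)
definition laurent :: "(('n \<Rightarrow> int) \<Rightarrow> complex) set" where
  "laurent = {f. finite {m. f m \<noteq> 0}}"

(* The semigroup ring R_A = span of t^a, a in NA *)
definition semigroup_ring :: "('n \<Rightarrow> int) set \<Rightarrow> (('n \<Rightarrow> int) \<Rightarrow> complex) set" where
  "semigroup_ring A = {f \<in> laurent. \<forall>m. f m \<noteq> 0 \<longrightarrow> m \<in> nat_span A}"

definition ffact_int :: "int \<Rightarrow> nat \<Rightarrow> int" where
  "ffact_int x k = (\<Prod>j<k. x - int j)"

(* Differential operators in C[t^{+-1}]<d_1,...,d_d>: finitely supported coefficient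
   functions P with P = sum_{(a,b)} P(a,b) t^a d^b. *)
definition diff_ops :: "((('n \<Rightarrow> int) \<times> ('n \<Rightarrow> nat)) \<Rightarrow> complex) set" where
  "diff_ops = {P. finite {p. P p \<noteq> 0}}"

(* Action: t^a d^b (t^m) = (prod_i ff(m_i,b_i)) t^{a+m-b} *)
definition op_act :: "((('n::finite \<Rightarrow> int) \<times> ('n \<Rightarrow> nat)) \<Rightarrow> complex)
     \<Rightarrow> (('n \<Rightarrow> int) \<Rightarrow> complex) \<Rightarrow> (('n \<Rightarrow> int) \<Rightarrow> complex)" where
  "op_act P f = (\<lambda>m. \<Sum>p\<in>{p. P p \<noteq> 0}. \<Sum>u\<in>{u. f u \<noteq> 0}.
       (if (\<lambda>i. fst p i + u i - int (snd p i)) = m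
        then P p * of_int (\<Prod>i\<in>UNIV. ffact_int (u i) (snd p i)) * f u else 0))"

definition diff_ops_RA :: "('n::finite \<Rightarrow> int) set \<Rightarrow> ((('n \<Rightarrow> int) \<times> ('n \<Rightarrow> nat)) \<Rightarrow> complex) set" where
  "diff_ops_RA A = {P \<in> diff_ops. \<forall>f \<in> semigroup_ring A. op_act P f \<in> semigroup_ring A}"

definition graded_submodule :: "('n::finite \<Rightarrow> int) set \<Rightarrow> (('n \<Rightarrow> int) \<Rightarrow> complex) set \<Rightarrow> bool" where
  "graded_submodule A M \<longleftrightarrow> M \<subseteq> semigroup_ring A \<and> (\<lambda>_. 0) \<in> M \<and>
     (\<forall>f\<in>M. \<forall>g\<in>M. (\<lambda>m. f m + g m) \<in> M) \<and>
     (\<forall>P\<in>diff_ops_RA A. \<forall>f\<in>M. op_act P f \<in> M) \<and>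
     (\<forall>f\<in>M. \<forall>m. (\<lambda>x. if x = m then f m else 0) \<in> M)"

definition graded_simple :: "('n::finite \<Rightarrow> int) set \<Rightarrow> bool" where
  "graded_simple A \<longleftrightarrow> semigroup_ring A \<noteq> {\<lambda>_. 0} \<and>
     (\<forall>M. graded_submodule A M \<longrightarrow> M = {\<lambda>_. 0} \<or> M = semigroup_ring A)"

end

(*
  Call F saturated if QF cap Z^d = ZF.

  (=>) Let F be the set of points of A on a face and g a point of (QF cap Z^d) - ZF. The monomials
  t^u such that u + g' lies in NA for some g' in (QF cap Z^d) - ZF span a graded D(R_A)-submodule:
  the coefficient of t^v in P t^u is a polynomial in u, and moving u along a line inside NA in a
  direction built from g shows that a nonzero coefficient forces v to be of the same kind. The
  submodule contains a monomial but not 1, because NA cap QF = NF for a face F.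

  (<=) For m in NA it suffices to find a polynomial phi with phi(m) /= 0 that vanishes at every
  x in NA with x - m not in NA: then t^(-m) phi(theta) lies in D(R_A) and maps t^m to a nonzero
  constant, from which multiplication operators generate all of R_A. These x lie on finitely
  many rational hyperplanes avoiding m. Write x = sum n_a a and fix rapidly increasing thresholds;
  at a gap between two thresholds, the elements with large coefficients form a set B whose sum
  lies in the relative interior of the smallest face F containing B. If the bounded remainder q
  satisfies q - m in QF, saturation of F gives x - m in NA; otherwise a linear form vanishing on F
  separates q from m, and x lies on its level set through q.
*)
theory Submission
  imports Defs "HOL-Computational_Algebra.Polynomial" "HOL-Library.FuncSet"
begin

lemma nat_span_of_nat_coeffs: "(\<lambda>i. \<Sum>a\<in>F. int (n a) * a i) \<in> nat_span F"
  unfolding nat_span_def by blast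

lemma nat_span_coeffsI: "x = (\<lambda>i. \<Sum>a\<in>F. int (n a) * a i) \<Longrightarrow> x \<in> nat_span F"
  using nat_span_of_nat_coeffs by simp

lemma int_span_coeffsI: "x = (\<lambda>i. \<Sum>a\<in>F. c a * a i) \<Longrightarrow> x \<in> int_span F"
  unfolding int_span_def by (intro CollectI exI[of _ c])

lemma nat_span_add:
  assumes "x \<in> nat_span F" "y \<in> nat_span F"
  shows "(\<lambda>i. x i + y i) \<in> nat_span F"
proof -
  obtain c d where "x = (\<lambda>i. \<Sum>a\<in>F. int (c a) * a i)" "y = (\<lambda>i. \<Sum>a\<in>F. int (d a) * a i)"
    using assms unfolding nat_span_def by blast
  then have "(\<lambda>i. x i + y i) = (\<lambda>i. \<Sum>a\<in>F. int (c a + d a) * a i)"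
    by (simp add: sum.distrib algebra_simps)
  then show ?thesis
    by (rule nat_span_coeffsI)
qed

lemma nat_span_zero: "(\<lambda>i. 0) \<in> nat_span F"
  unfolding nat_span_def by (auto intro: exI[of _ "\<lambda>_. 0"])

lemma nat_span_scale:
  assumes "x \<in> nat_span F"
  shows "(\<lambda>i. int k * x i) \<in> nat_span F"
proof -
  obtain c where "x = (\<lambda>i. \<Sum>a\<in>F. int (c a) * a i)"
    using assms unfolding nat_span_def by blast
  then have "(\<lambda>i. int k * x i) = (\<lambda>i. \<Sum>a\<in>F. int (k * c a) * a i)"
    by (simp add: sum_distrib_left algebra_simps)
  then show ?thesis
    by (rule nat_span_coeffsI)
qed

lemma nat_span_sum:
  "finite I \<Longrightarrow> (\<And>j. j \<in> I \<Longrightarrow> x j \<in> nat_span F) \<Longrightarrow> (\<lambda>i. \<Sum>j\<in>I. x j i) \<in> nat_span F"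
  by (induction I rule: finite_induct) (auto intro: nat_span_zero nat_span_add)

lemma mem_nat_span:
  assumes "finite F" "a \<in> F"
  shows "a \<in> nat_span F"
proof -
  have "a = (\<lambda>i. \<Sum>b\<in>F. int (if b = a then 1 else 0) * b i)"
  proof
    fix i
    have "(\<Sum>b\<in>F. int (if b = a then 1 else 0) * b i) = (\<Sum>b\<in>F. if b = a then a i else 0)"
      by (intro sum.cong) auto
    then show "a i = (\<Sum>b\<in>F. int (if b = a then 1 else 0) * b i)"
      using assms by simp
  qed
  also have "\<dots> \<in> nat_span F"
    by (rule nat_span_of_nat_coeffs)
  finally show ?thesis .
qed

lemma nat_span_sum_mem: "finite F \<Longrightarrow> (\<lambda>i. \<Sum>a\<in>F. a i) \<in> nat_span F"
  using nat_span_sum[of F "\<lambda>a. a"] mem_nat_span by blast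

lemma nat_span_mono:
  assumes "finite A" "F \<subseteq> A" "x \<in> nat_span F"
  shows "x \<in> nat_span A"
proof -
  obtain n where x: "x = (\<lambda>i. \<Sum>a\<in>F. int (n a) * a i)"
    using assms(3) unfolding nat_span_def by blast
  have "(\<Sum>a\<in>F. int (n a) * a i) = (\<Sum>a\<in>A. int (if a \<in> F then n a else 0) * a i)" for i
    using assms(1,2) by (intro sum.mono_neutral_cong_left) auto
  then show ?thesis
    unfolding x using nat_span_of_nat_coeffs[of "\<lambda>a. if a \<in> F then n a else 0" A] by simp
qed

lemma nat_span_subset_int_span: "nat_span F \<subseteq> int_span F"
  unfolding nat_span_def int_span_def by auto

lemma int_span_diff:
  "x \<in> int_span F \<Longrightarrow> y \<in> int_span F \<Longrightarrow> (\<lambda>i. x i - y i) \<in> int_span F"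
proof (clarsimp simp: int_span_def)
  fix c d :: "_ \<Rightarrow> int"
  show "\<exists>e. (\<lambda>i. (\<Sum>a\<in>F. c a * a i) - (\<Sum>a\<in>F. d a * a i)) = (\<lambda>i. \<Sum>a\<in>F. e a * a i)"
    by (rule exI[of _ "\<lambda>a. c a - d a"]) (simp add: sum_subtractf algebra_simps)
qed

lemma int_span_subset_rat_span: "int_span F \<subseteq> rat_span_lattice F"
proof
  fix x
  assume "x \<in> int_span F"
  then obtain c where "x = (\<lambda>i. \<Sum>a\<in>F. c a * a i)"
    unfolding int_span_def by blast
  then show "x \<in> rat_span_lattice F"
    unfolding rat_span_lattice_def by (intro CollectI exI[of _ "\<lambda>a. of_int (c a)"]) simp
qed

lemma rat_span_lattice_add:
  "x \<in> rat_span_lattice F \<Longrightarrow> y \<in> rat_span_lattice F \<Longrightarrow> (\<lambda>i. x i + y i) \<in> rat_span_lattice F"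
proof (clarsimp simp: rat_span_lattice_def)
  fix q r :: "_ \<Rightarrow> rat"
  assume "(\<lambda>i. rat_of_int (x i)) = (\<lambda>i. \<Sum>a\<in>F. q a * rat_of_int (a i))"
    "(\<lambda>i. rat_of_int (y i)) = (\<lambda>i. \<Sum>a\<in>F. r a * rat_of_int (a i))"
  then show "\<exists>s. (\<lambda>i. rat_of_int (x i) + rat_of_int (y i)) = (\<lambda>i. \<Sum>a\<in>F. s a * rat_of_int (a i))"
    by (intro exI[of _ "\<lambda>a. q a + r a"]) (simp add: fun_eq_iff sum.distrib algebra_simps)
qed

lemma rat_span_lattice_scale:
  "x \<in> rat_span_lattice F \<Longrightarrow> (\<lambda>i. k * x i) \<in> rat_span_lattice F"
proof (clarsimp simp: rat_span_lattice_def)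
  fix q :: "_ \<Rightarrow> rat"
  assume "(\<lambda>i. rat_of_int (x i)) = (\<lambda>i. \<Sum>a\<in>F. q a * rat_of_int (a i))"
  then show "\<exists>r. (\<lambda>i. rat_of_int k * rat_of_int (x i)) = (\<lambda>i. \<Sum>a\<in>F. r a * rat_of_int (a i))"
    by (intro exI[of _ "\<lambda>a. of_int k * q a"]) (simp add: fun_eq_iff sum_distrib_left algebra_simps)
qed

lemma rat_common_denominator:
  fixes X :: "rat set"
  assumes "finite X"
  shows "\<exists>D::nat. D > 0 \<and> (\<forall>x\<in>X. \<exists>k::int. of_nat D * x = of_int k)"
  using assms
proof (induction X rule: finite_induct)
  case empty
  show ?case
    by (rule exI[of _ 1]) simp
next
  case (insert x X)
  then obtain D where D: "D > 0" "\<forall>y\<in>X. \<exists>k::int. of_nat D * y = of_int k"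
    by blast
  obtain n d where nd: "quotient_of x = (n, d)"
    by (cases "quotient_of x")
  have d: "d > 0" and x: "x = of_int n / of_int d"
    using quotient_of_denom_pos[OF nd] quotient_of_div[OF nd] by auto
  have "\<exists>k::int. of_nat (D * nat d) * y = of_int k" if y: "y \<in> insert x X" for y
  proof (cases "y = x")
    case True
    then have "of_nat (D * nat d) * y = of_int (int D * n)"
      using d x by (simp add: field_simps)
    then show ?thesis
      by blast
  next
    case False
    then obtain k where "of_nat D * y = of_int k"
      using D(2) y by auto
    then have "of_nat (D * nat d) * y = of_int (k * d)"
      using d by (simp add: field_simps)
    then show ?thesis
      by blast
  qed
  then show ?case
    using D(1) d by (intro exI[of _ "D * nat d"]) auto
qed

lemma rat_span_lattice_denominator:
  assumes "finite F" "g \<in> rat_span_lattice F"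
  obtains D :: nat where "D > 0" "(\<lambda>i. int D * g i) \<in> int_span F"
proof -
  obtain q where q: "(\<lambda>i. rat_of_int (g i)) = (\<lambda>i. \<Sum>a\<in>F. q a * rat_of_int (a i))"
    using assms(2) unfolding rat_span_lattice_def by blast
  obtain D :: nat where D: "D > 0" "\<forall>x\<in>q ` F. \<exists>k::int. of_nat D * x = of_int k"
    using rat_common_denominator[of "q ` F"] assms(1) by auto
  then have "\<forall>a\<in>F. \<exists>k::int. of_nat D * q a = of_int k"
    by auto
  then obtain n where n: "\<forall>a\<in>F. of_nat D * q a = of_int (n a)"
    by (rule bchoice[elim_format]) blast
  have "rat_of_int (int D * g i) = rat_of_int (\<Sum>a\<in>F. n a * a i)" for i
  proof -
    have "rat_of_int (int D * g i) = (\<Sum>a\<in>F. (of_nat D * q a) * rat_of_int (a i))"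
      using fun_cong[OF q, of i] by (simp add: sum_distrib_left mult.assoc)
    also have "\<dots> = rat_of_int (\<Sum>a\<in>F. n a * a i)"
      using n by simp
    finally show ?thesis .
  qed
  then have "(\<lambda>i. int D * g i) = (\<lambda>i. \<Sum>a\<in>F. n a * a i)"
    by (simp only: of_int_eq_iff)
  then show ?thesis
    by (rule that[OF D(1) int_span_coeffsI])
qed

lemma int_span_plus_multiple_sum:
  assumes "finite F" "h \<in> int_span F"
  obtains N :: nat where "(\<lambda>i. h i + int N * (\<Sum>a\<in>F. a i)) \<in> nat_span F"
proof -
  obtain c where c: "h = (\<lambda>i. \<Sum>a\<in>F. c a * a i)"
    using assms(2) unfolding int_span_def by blast
  define N where "N = (\<Sum>a\<in>F. nat \<bar>c a\<bar>)"
  have "c a + int N \<ge> 0" if "a \<in> F" for a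
  proof -
    have "nat \<bar>c a\<bar> \<le> N"
      unfolding N_def using assms(1) that by (intro member_le_sum) auto
    then show ?thesis
      by linarith
  qed
  then have "(\<lambda>i. h i + int N * (\<Sum>a\<in>F. a i)) = (\<lambda>i. \<Sum>a\<in>F. int (nat (c a + int N)) * a i)"
    unfolding c by (auto simp: sum_distrib_left sum.distrib[symmetric] algebra_simps intro!: sum.cong)
  then show ?thesis
    by (intro that) (rule nat_span_coeffsI)
qed

lemma rat_span_lattice_line:
  assumes F: "finite F" and g: "g \<in> rat_span_lattice F"
  obtains D :: nat and z where "D > 0" "\<And>t. (\<lambda>i. t * z i) \<in> rat_span_lattice F"
    "\<And>j. (\<lambda>i. (1 + int j * int D) * z i - g i) \<in> nat_span F"
proof -
  obtain D where D: "D > 0" "(\<lambda>i. int D * g i) \<in> int_span F"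
    using rat_span_lattice_denominator[OF F g] .
  then obtain D' where D': "D = Suc D'"
    using gr0_implies_Suc by blast
  let ?\<sigma> = "\<lambda>i. \<Sum>a\<in>F. a i"
  obtain N where N: "(\<lambda>i. int D * g i + int N * ?\<sigma> i) \<in> nat_span F"
    using int_span_plus_multiple_sum[OF F D(2)] .
  have N\<sigma>: "(\<lambda>i. int N * ?\<sigma> i) \<in> nat_span F"
    using nat_span_scale[OF nat_span_sum_mem[OF F]] .
  define z where "z = (\<lambda>i. g i + int N * ?\<sigma> i)"
  have "z \<in> rat_span_lattice F"
    unfolding z_def using nat_span_subset_int_span int_span_subset_rat_span N\<sigma> g
    by (intro rat_span_lattice_add) auto
  then have "(\<lambda>i. t * z i) \<in> rat_span_lattice F" for t
    by (rule rat_span_lattice_scale)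
  moreover have "(\<lambda>i. (1 + int j * int D) * z i - g i) \<in> nat_span F" for j
  proof -
    have eq: "(\<lambda>i. (1 + int j * int D) * z i - g i) =
        (\<lambda>i. int j * (int D * g i + int N * ?\<sigma> i) + int (1 + j * D') * (int N * ?\<sigma> i))"
      unfolding z_def D' by (simp add: algebra_simps)
    show ?thesis
      unfolding eq by (rule nat_span_add[OF nat_span_scale[OF N] nat_span_scale[OF N\<sigma>]])
  qed
  ultimately show ?thesis
    using that D(1) by blast
qed

lemma int_span_shifted_into_nat_span:
  assumes "g \<in> int_span A"
  obtains q where "q \<in> nat_span A" "(\<lambda>i. q i + g i) \<in> nat_span A"
proof -
  obtain c where c: "g = (\<lambda>i. \<Sum>a\<in>A. c a * a i)"
    using assms unfolding int_span_def by blast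
  have eq: "(\<lambda>i. (\<Sum>a\<in>A. int (nat (- c a)) * a i) + g i) = (\<lambda>i. \<Sum>a\<in>A. int (nat (c a)) * a i)"
    unfolding c by (auto simp: sum.distrib[symmetric] algebra_simps intro!: sum.cong)
  show ?thesis
  proof (rule that[of "\<lambda>i. \<Sum>a\<in>A. int (nat (- c a)) * a i"])
    show "(\<lambda>i. (\<Sum>a\<in>A. int (nat (- c a)) * a i) + g i) \<in> nat_span A"
      unfolding eq by (rule nat_span_of_nat_coeffs)
  qed (rule nat_span_of_nat_coeffs)
qed

definition laurent_monom :: "('n \<Rightarrow> int) \<Rightarrow> ('n \<Rightarrow> int) \<Rightarrow> complex" where
  "laurent_monom u = (\<lambda>x. if x = u then 1 else 0)"

definition ffact_vec :: "('n::finite \<Rightarrow> int) \<Rightarrow> ('n \<Rightarrow> nat) \<Rightarrow> int" where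
  "ffact_vec x b = (\<Prod>i\<in>UNIV. ffact_int (x i) (b i))"

lemma semigroup_ring_iff:
  "f \<in> semigroup_ring A \<longleftrightarrow> finite {m. f m \<noteq> 0} \<and> (\<forall>m. f m \<noteq> 0 \<longrightarrow> m \<in> nat_span A)"
  unfolding semigroup_ring_def laurent_def by auto

lemma laurent_monom_in_semigroup_ring: "u \<in> nat_span A \<Longrightarrow> laurent_monom u \<in> semigroup_ring A"
  unfolding semigroup_ring_iff laurent_monom_def by auto

lemma laurent_monom_nonzero: "laurent_monom u \<noteq> (\<lambda>_. 0)"
  unfolding laurent_monom_def by (metis one_neq_zero)

lemma diff_ops_RA_finite_support: "P \<in> diff_ops_RA A \<Longrightarrow> finite {p. P p \<noteq> 0}"
  unfolding diff_ops_RA_def diff_ops_def by auto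

lemma op_act_eq:
  "op_act P f y = (\<Sum>u | f u \<noteq> 0. f u * (\<Sum>p | P p \<noteq> 0.
      if (\<lambda>i. fst p i + u i - int (snd p i)) = y then P p * of_int (ffact_vec u (snd p)) else 0))"
  unfolding op_act_def ffact_vec_def
  by (subst sum.swap) (auto simp: sum_distrib_left intro!: sum.cong)

lemma op_act_nonzeroD:
  assumes "op_act P f y \<noteq> 0"
  shows "\<exists>p u. P p \<noteq> 0 \<and> f u \<noteq> 0 \<and> y = (\<lambda>i. fst p i + u i - int (snd p i))"
proof -
  obtain u where "f u \<noteq> 0" and "(\<Sum>p | P p \<noteq> 0.
      if (\<lambda>i. fst p i + u i - int (snd p i)) = y then P p * of_int (ffact_vec u (snd p)) else 0) \<noteq> 0"
    using assms unfolding op_act_eq by (auto elim: sum.not_neutral_contains_not_neutral)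
  then obtain p where "P p \<noteq> 0" "(\<lambda>i. fst p i + u i - int (snd p i)) = y"
    by (auto elim: sum.not_neutral_contains_not_neutral split: if_splits)
  with \<open>f u \<noteq> 0\<close> show ?thesis by blast
qed

lemma op_act_in_laurent:
  assumes "P \<in> diff_ops" "f \<in> laurent"
  shows "op_act P f \<in> laurent"
proof -
  let ?g = "\<lambda>(p :: ('a \<Rightarrow> int) \<times> ('a \<Rightarrow> nat), u). (\<lambda>i. fst p i + u i - int (snd p i))"
  have "{y. op_act P f y \<noteq> 0} \<subseteq> ?g ` ({p. P p \<noteq> 0} \<times> {u. f u \<noteq> 0})"
    using op_act_nonzeroD by fastforce
  moreover have "finite (?g ` ({p. P p \<noteq> 0} \<times> {u. f u \<noteq> 0}))"
    using assms by (auto simp: diff_ops_def laurent_def)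
  ultimately show ?thesis
    unfolding laurent_def using finite_subset by blast
qed

lemma op_act_laurent_monom:
  "op_act P (laurent_monom x) y = (\<Sum>p | P p \<noteq> 0.
      if (\<lambda>i. fst p i + x i - int (snd p i)) = y then P p * of_int (ffact_vec x (snd p)) else 0)"
proof -
  have support: "{u. laurent_monom x u \<noteq> 0} = {x}"
    by (auto simp: laurent_monom_def)
  show ?thesis
    unfolding op_act_eq support by (simp add: laurent_monom_def)
qed

lemma op_act_laurent_monom_shift:
  "op_act P (laurent_monom x) (\<lambda>i. x i + c i) = (\<Sum>p | P p \<noteq> 0.
      (if (\<lambda>i. fst p i - int (snd p i)) = c then P p else 0) * of_int (ffact_vec x (snd p)))"
proof -
  have "((\<lambda>i. fst p i + x i - int (snd p i)) = (\<lambda>i. x i + c i)) \<longleftrightarrow>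
        (\<lambda>i. fst p i - int (snd p i)) = c" for p :: "('a \<Rightarrow> int) \<times> ('a \<Rightarrow> nat)"
    by (auto simp: fun_eq_iff algebra_simps)
  then show ?thesis
    unfolding op_act_laurent_monom by (intro sum.cong) auto
qed

lemma op_act_nonzero_on_monom:
  assumes "op_act P f y \<noteq> 0"
  shows "\<exists>u. f u \<noteq> 0 \<and> op_act P (laurent_monom u) y \<noteq> 0"
proof -
  obtain u where "f u \<noteq> 0" and "f u * (\<Sum>p | P p \<noteq> 0.
      if (\<lambda>i. fst p i + u i - int (snd p i)) = y then P p * of_int (ffact_vec u (snd p)) else 0) \<noteq> 0"
    using assms unfolding op_act_eq by (auto elim: sum.not_neutral_contains_not_neutral)
  then show ?thesis
    unfolding op_act_laurent_monom by auto
qed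

lemma graded_submodule_supported_on:
  assumes closed: "\<And>u P v. u \<in> S \<Longrightarrow> P \<in> diff_ops_RA A \<Longrightarrow> op_act P (laurent_monom u) v \<noteq> 0 \<Longrightarrow> v \<in> S"
  shows "graded_submodule A {f \<in> semigroup_ring A. \<forall>m. f m \<noteq> 0 \<longrightarrow> m \<in> S}"
    (is "graded_submodule A ?M")
  unfolding graded_submodule_def
proof (intro conjI ballI allI)
  show "?M \<subseteq> semigroup_ring A" "(\<lambda>_. 0) \<in> ?M"
    by (auto simp: semigroup_ring_iff)
next
  fix f g
  assume f: "f \<in> ?M" and g: "g \<in> ?M"
  have supp: "{m. f m + g m \<noteq> 0} \<subseteq> {m. f m \<noteq> 0} \<union> {m. g m \<noteq> 0}"
    by auto
  then have "finite {m. f m + g m \<noteq> 0}"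
    using f g by (auto simp: semigroup_ring_iff intro: finite_subset)
  moreover have "m \<in> nat_span A \<and> m \<in> S" if "f m + g m \<noteq> 0" for m
    using that supp f g by (auto simp: semigroup_ring_iff)
  ultimately show "(\<lambda>m. f m + g m) \<in> ?M"
    by (simp add: semigroup_ring_iff)
next
  fix P f
  assume P: "P \<in> diff_ops_RA A" and f: "f \<in> ?M"
  have "op_act P f \<in> semigroup_ring A"
    using P f unfolding diff_ops_RA_def by blast
  moreover have "m \<in> S" if "op_act P f m \<noteq> 0" for m
    using op_act_nonzero_on_monom[OF that] f closed P by blast
  ultimately show "op_act P f \<in> ?M"
    by blast
next
  fix f m
  assume "f \<in> ?M"
  moreover have "finite {x. (if x = m then f m else 0) \<noteq> 0}"
    by (rule finite_subset[of _ "{m}"]) auto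
  ultimately show "(\<lambda>x. if x = m then f m else 0) \<in> ?M"
    unfolding semigroup_ring_iff by auto
qed

section \<open>Polynomial functions in the falling factorial basis\<close>

definition ffact_poly :: "(('n::finite \<Rightarrow> int) \<Rightarrow> complex) \<Rightarrow> bool" where
  "ffact_poly \<phi> \<longleftrightarrow> (\<exists>Bs c. finite Bs \<and> \<phi> = (\<lambda>x. \<Sum>b\<in>Bs. c b * of_int (ffact_vec x b)))"

lemma ffact_poly_ffact_vec: "ffact_poly (\<lambda>x. k * of_int (ffact_vec x b))"
  unfolding ffact_poly_def by (intro exI[of _ "{b}"] exI[of _ "\<lambda>_. k"]) simp

lemma ffact_poly_zero: "ffact_poly (\<lambda>x. 0)"
  unfolding ffact_poly_def by (intro exI[of _ "{}"]) simp

lemma ffact_poly_add: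
  assumes "ffact_poly \<phi>" "ffact_poly \<psi>"
  shows "ffact_poly (\<lambda>x. \<phi> x + \<psi> x)"
proof -
  obtain Bs c where Bs: "finite Bs" "\<phi> = (\<lambda>x. \<Sum>b\<in>Bs. c b * of_int (ffact_vec x b))"
    using assms(1) unfolding ffact_poly_def by blast
  obtain Cs d where Cs: "finite Cs" "\<psi> = (\<lambda>x. \<Sum>b\<in>Cs. d b * of_int (ffact_vec x b))"
    using assms(2) unfolding ffact_poly_def by blast
  let ?U = "Bs \<union> Cs"
  have extend: "(\<Sum>b\<in>S. e b * of_int (ffact_vec x b)) =
      (\<Sum>b\<in>?U. (if b \<in> S then e b else 0) * of_int (ffact_vec x b))"
    if "S \<subseteq> ?U" for S e x
    using that Bs(1) Cs(1) by (intro sum.mono_neutral_cong_left) auto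
  have "\<phi> x + \<psi> x = (\<Sum>b\<in>?U. ((if b \<in> Bs then c b else 0) + (if b \<in> Cs then d b else 0))
      * of_int (ffact_vec x b))" for x
    unfolding Bs(2) Cs(2) using extend[of Bs c x] extend[of Cs d x] by (simp add: sum.distrib distrib_right)
  then show ?thesis
    unfolding ffact_poly_def using Bs(1) Cs(1) by (intro exI[of _ ?U]) auto
qed

lemma ffact_poly_sum:
  "finite I \<Longrightarrow> (\<And>i. i \<in> I \<Longrightarrow> ffact_poly (\<phi> i)) \<Longrightarrow> ffact_poly (\<lambda>x. \<Sum>i\<in>I. \<phi> i x)"
  by (induction I rule: finite_induct) (auto intro: ffact_poly_zero ffact_poly_add)

lemma ffact_poly_cmult:
  assumes "ffact_poly \<phi>"
  shows "ffact_poly (\<lambda>x. k * \<phi> x)"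
proof -
  obtain Bs c where Bs: "finite Bs" "\<phi> = (\<lambda>x. \<Sum>b\<in>Bs. c b * of_int (ffact_vec x b))"
    using assms unfolding ffact_poly_def by blast
  then have "(\<lambda>x. k * \<phi> x) = (\<lambda>x. \<Sum>b\<in>Bs. (k * c b) * of_int (ffact_vec x b))"
    by (simp add: sum_distrib_left mult.assoc)
  then show ?thesis
    unfolding ffact_poly_def using Bs(1) by (intro exI[of _ Bs] exI[of _ "\<lambda>b. k * c b"]) simp
qed

lemma coord_mult_ffact_vec:
  "x j * ffact_vec x b = ffact_vec x (b(j := Suc (b j))) + int (b j) * ffact_vec x b"
proof -
  have split: "ffact_vec x b' = ffact_int (x j) (b' j) * (\<Prod>i\<in>UNIV-{j}. ffact_int (x i) (b' i))" for b'
    unfolding ffact_vec_def by (simp add: prod.remove)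
  have "(\<Prod>i\<in>UNIV-{j}. ffact_int (x i) ((b(j := Suc (b j))) i)) = (\<Prod>i\<in>UNIV-{j}. ffact_int (x i) (b i))"
    by (rule prod.cong) auto
  then show ?thesis
    by (subst (1 2 3) split) (simp add: ffact_int_def algebra_simps)
qed

lemma ffact_poly_coord_mult:
  assumes "ffact_poly \<phi>"
  shows "ffact_poly (\<lambda>x. of_int (x j) * \<phi> x)"
proof -
  obtain Bs c where Bs: "finite Bs" "\<phi> = (\<lambda>x. \<Sum>b\<in>Bs. c b * of_int (ffact_vec x b))"
    using assms unfolding ffact_poly_def by blast
  have "of_int (x j) * \<phi> x = (\<Sum>b\<in>Bs. c b * of_int (ffact_vec x (b(j := Suc (b j)))) +
      (c b * of_nat (b j)) * of_int (ffact_vec x b))" for x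
  proof -
    have "of_int (x j) * \<phi> x = (\<Sum>b\<in>Bs. c b * of_int (x j * ffact_vec x b))"
      unfolding Bs(2) by (simp add: sum_distrib_left algebra_simps)
    then show ?thesis
      unfolding coord_mult_ffact_vec by (simp add: algebra_simps)
  qed
  moreover have "ffact_poly (\<lambda>x. \<Sum>b\<in>Bs. c b * of_int (ffact_vec x (b(j := Suc (b j)))) +
      (c b * of_nat (b j)) * of_int (ffact_vec x b))"
    using Bs(1) by (intro ffact_poly_sum ffact_poly_add ffact_poly_ffact_vec)
  ultimately show ?thesis
    by simp
qed

lemma ffact_poly_affine_mult:
  assumes "ffact_poly \<phi>"
  shows "ffact_poly (\<lambda>x. (c0 + (\<Sum>j\<in>UNIV. c j * of_int (x j))) * \<phi> x)"
proof -
  have "(\<lambda>x. (c0 + (\<Sum>j\<in>UNIV. c j * of_int (x j))) * \<phi> x) =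
        (\<lambda>x. c0 * \<phi> x + (\<Sum>j\<in>UNIV. c j * (of_int (x j) * \<phi> x)))"
    by (simp add: distrib_right sum_distrib_right mult.assoc)
  moreover have "ffact_poly (\<lambda>x. c0 * \<phi> x + (\<Sum>j\<in>UNIV. c j * (of_int (x j) * \<phi> x)))"
    using assms by (intro ffact_poly_add ffact_poly_cmult ffact_poly_sum ffact_poly_coord_mult) auto
  ultimately show ?thesis
    by simp
qed

lemma ffact_vec_zero: "ffact_vec x (\<lambda>_. 0) = 1"
  unfolding ffact_vec_def ffact_int_def by simp

lemma ffact_poly_prod_affine:
  "finite I \<Longrightarrow> ffact_poly (\<lambda>x. \<Prod>\<iota>\<in>I. c0 \<iota> + (\<Sum>j\<in>UNIV. c \<iota> j * of_int (x j)))"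
proof (induction I rule: finite_induct)
  case empty
  have "ffact_poly (\<lambda>x. 1 * of_int (ffact_vec x (\<lambda>_. 0)))"
    by (rule ffact_poly_ffact_vec)
  then show ?case
    by (simp add: ffact_vec_zero)
next
  case (insert \<iota> I)
  then show ?case
    using ffact_poly_affine_mult[of _ "c0 \<iota>" "c \<iota>"] by simp
qed

lemma ffact_poly_on_line:
  assumes "ffact_poly \<phi>"
  obtains p where "\<And>t::int. \<phi> (\<lambda>i. u i + t * z i) = poly p (of_int t)"
proof -
  obtain Bs c where Bs: "finite Bs" "\<phi> = (\<lambda>x. \<Sum>b\<in>Bs. c b * of_int (ffact_vec x b))"
    using assms unfolding ffact_poly_def by blast
  let ?p = "\<Sum>b\<in>Bs. smult (c b) (\<Prod>i\<in>UNIV. \<Prod>j<b i. [:of_int (u i - int j), of_int (z i):])"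
  have "\<phi> (\<lambda>i. u i + t * z i) = poly ?p (of_int t)" for t :: int
    unfolding Bs(2) ffact_vec_def ffact_int_def by (simp add: poly_sum poly_prod algebra_simps)
  then show ?thesis
    using that by blast
qed

lemma ffact_poly_vanishing_on_line:
  assumes "ffact_poly \<phi>" "infinite T" "\<And>t. t \<in> T \<Longrightarrow> \<phi> (\<lambda>i. u i + t * z i) = 0"
  shows "\<phi> u = 0"
proof -
  obtain p where p: "\<And>t::int. \<phi> (\<lambda>i. u i + t * z i) = poly p (of_int t)"
    using ffact_poly_on_line[OF assms(1)] by blast
  have "of_int ` T \<subseteq> {x. poly p x = 0}"
    using assms(3) p by auto
  moreover have "infinite (of_int ` T :: complex set)"
    using assms(2) by (metis finite_imageD inj_onI of_int_eq_iff)
  ultimately have "p = 0"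
    using poly_roots_finite finite_subset by blast
  then show ?thesis
    using p[of 0] by simp
qed

lemma ffact_poly_op_act_shift:
  assumes "finite {p. P p \<noteq> 0}"
  shows "ffact_poly (\<lambda>x. op_act P (laurent_monom x) (\<lambda>i. x i + c i))"
  unfolding op_act_laurent_monom_shift using assms by (intro ffact_poly_sum ffact_poly_ffact_vec)

lemma op_act_coeff_vanishing_on_line:
  assumes P: "finite {p. P p \<noteq> 0}" and T: "infinite T"
    and vanish: "\<And>t. t \<in> T \<Longrightarrow> op_act P (laurent_monom (\<lambda>i. u i + t * z i)) (\<lambda>i. v i + t * z i) = 0"
  shows "op_act P (laurent_monom u) v = 0"
proof -
  define c where "c = (\<lambda>i. v i - u i)"
  have shift: "(\<lambda>i. (u i + t * z i) + c i) = (\<lambda>i. v i + t * z i)" for t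
    unfolding c_def by auto
  have "op_act P (laurent_monom u) (\<lambda>i. u i + c i) = 0"
    by (rule ffact_poly_vanishing_on_line[OF ffact_poly_op_act_shift[OF P, of c] T, where z = z])
      (simp add: shift vanish)
  moreover have "(\<lambda>i. u i + c i) = v"
    unfolding c_def by auto
  ultimately show ?thesis
    by simp
qed

definition vdot :: "('n::finite \<Rightarrow> 'a::comm_ring_1) \<Rightarrow> ('n \<Rightarrow> 'a) \<Rightarrow> 'a" where
  "vdot w v = (\<Sum>i\<in>UNIV. w i * v i)"

lemma vdot_sum: "vdot w (\<lambda>i. \<Sum>a\<in>X. c a * f a i) = (\<Sum>a\<in>X. c a * vdot w (f a))"
  unfolding vdot_def by (simp add: sum_distrib_left mult.left_commute) (rule sum.swap)

lemma vdot_add_left: "vdot (\<lambda>i. a i + c * b i) v = vdot a v + c * vdot b v"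
  unfolding vdot_def by (simp add: algebra_simps sum.distrib sum_distrib_left)

lemma vdot_diff_left: "vdot (\<lambda>i. a i - c * b i) v = vdot a v - c * vdot b v"
  unfolding vdot_def by (simp add: algebra_simps sum_subtractf sum_distrib_left)

lemma vdot_diff_right: "vdot w (\<lambda>i. a i - c * b i) = vdot w a - c * vdot w b"
  unfolding vdot_def by (simp add: algebra_simps sum_subtractf sum_distrib_left)

lemma vdot_uminus_right: "vdot w (\<lambda>i. - v i) = - vdot w v"
  unfolding vdot_def by (simp add: sum_negf)

lemma vdot_self_pos:
  fixes v :: "'n::finite \<Rightarrow> 'a::linordered_field"
  assumes "v \<noteq> (\<lambda>i. 0)"
  shows "vdot v v > 0"
proof -
  obtain i0 where "v i0 \<noteq> 0"
    using assms by auto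
  then have "0 < v i0 * v i0"
    by (cases "v i0 > 0") (auto simp: zero_less_mult_iff)
  also have "\<dots> \<le> vdot v v"
    unfolding vdot_def by (rule member_le_sum) auto
  finally show ?thesis .
qed

definition rat_vec :: "('n \<Rightarrow> int) \<Rightarrow> 'n \<Rightarrow> rat" where
  "rat_vec a = (\<lambda>i. of_int (a i))"

lemma rat_span_lattice_iff:
  "v \<in> rat_span_lattice F \<longleftrightarrow> (\<exists>\<mu>. rat_vec v = (\<lambda>i. \<Sum>a\<in>F. \<mu> a * rat_vec a i))"
  unfolding rat_span_lattice_def rat_vec_def by simp

lemma vdot_rat_vec_sum: "vdot W (rat_vec (\<lambda>i. \<Sum>a\<in>X. int (n a) * a i)) = (\<Sum>a\<in>X. of_nat (n a) * vdot W (rat_vec a))"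
  unfolding rat_vec_def by (simp add: vdot_sum[symmetric])

lemma vdot_rat_vec_add: "vdot W (rat_vec (\<lambda>i. x i + y i)) = vdot W (rat_vec x) + vdot W (rat_vec y)"
  unfolding vdot_def rat_vec_def by (simp add: sum.distrib algebra_simps)

lemma vdot_rat_vec_diff: "vdot W (rat_vec (\<lambda>i. x i - y i)) = vdot W (rat_vec x) - vdot W (rat_vec y)"
  using vdot_diff_right[of W "rat_vec x" 1 "rat_vec y"] unfolding rat_vec_def by simp

section \<open>Unsaturated faces give proper graded submodules\<close>

lemma vdot_real_pt_rat_span:
  assumes "g \<in> rat_span_lattice F" "\<forall>a\<in>F. vdot w (real_pt a) = 0"
  shows "vdot w (real_pt g) = 0"
proof -
  obtain q where "(\<lambda>i. rat_of_int (g i)) = (\<lambda>i. \<Sum>a\<in>F. q a * rat_of_int (a i))"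
    using assms(1) unfolding rat_span_lattice_def by blast
  then have "real_of_rat (rat_of_int (g i)) = real_of_rat (\<Sum>a\<in>F. q a * rat_of_int (a i))" for i
    by (simp add: fun_eq_iff)
  then have "real_pt g = (\<lambda>i. \<Sum>a\<in>F. real_of_rat (q a) * real_pt a i)"
    by (simp add: real_pt_def of_rat_sum of_rat_mult)
  then show ?thesis
    using assms(2) by (simp add: vdot_sum)
qed

lemma nat_span_face:
  assumes A: "finite A" and w: "\<forall>a\<in>A. 0 \<le> vdot w (real_pt a)"
    and g: "g \<in> nat_span A" "vdot w (real_pt g) = 0"
  shows "g \<in> nat_span {a\<in>A. vdot w (real_pt a) = 0}"
proof -
  let ?F = "{a\<in>A. vdot w (real_pt a) = 0}"
  obtain n where n: "g = (\<lambda>i. \<Sum>a\<in>A. int (n a) * a i)"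
    using g(1) unfolding nat_span_def by blast
  have "real_pt g = (\<lambda>i. \<Sum>a\<in>A. real (n a) * real_pt a i)"
    unfolding n real_pt_def by simp
  then have "(\<Sum>a\<in>A. real (n a) * vdot w (real_pt a)) = 0"
    using g(2) by (simp add: vdot_sum)
  then have "\<forall>a\<in>A. real (n a) * vdot w (real_pt a) = 0"
    using A w by (subst (asm) sum_nonneg_eq_0_iff) auto
  then have "\<forall>a\<in>A - ?F. n a = 0"
    by auto
  then have "g = (\<lambda>i. \<Sum>a\<in>?F. int (n a) * a i)"
    unfolding n using A by (intro ext sum.mono_neutral_right) auto
  then show ?thesis
    by (rule nat_span_coeffsI)
qed

text \<open>Monomials with these exponents span a proper graded submodule when \<open>F\<close> is an unsaturated face.\<close>
definition defect_points :: "('n \<Rightarrow> int) set \<Rightarrow> ('n \<Rightarrow> int) set \<Rightarrow> ('n \<Rightarrow> int) set" where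
  "defect_points A F = {u \<in> nat_span A. \<exists>g \<in> rat_span_lattice F - int_span F. (\<lambda>i. u i + g i) \<in> nat_span A}"

text \<open>The coefficient of \<open>t\<^sup>v\<close> in \<open>P t\<^sup>u\<close> is polynomial in \<open>u\<close> along lines \<open>u + s z\<close>; for
  \<open>s \<equiv> 1\<close> modulo a common denominator of \<open>g\<close>, the point \<open>u + s z\<close> stays in \<open>\<nat>A\<close> while
  \<open>v + s z \<notin> \<nat>A\<close> unless \<open>v\<close> is itself a defect point.\<close>
lemma defect_points_closed:
  fixes A F :: "('n::finite \<Rightarrow> int) set"
  assumes A: "finite A" and FA: "F \<subseteq> A" and u: "u \<in> defect_points A F"
    and P: "P \<in> diff_ops_RA A" and nz: "op_act P (laurent_monom u) v \<noteq> 0"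
  shows "v \<in> defect_points A F"
proof (rule ccontr)
  assume v_notin: "v \<notin> defect_points A F"
  have "op_act P (laurent_monom u) \<in> semigroup_ring A"
    using P laurent_monom_in_semigroup_ring u unfolding diff_ops_RA_def defect_points_def by blast
  then have v: "v \<in> nat_span A"
    using nz unfolding semigroup_ring_iff by blast
  obtain g where g: "g \<in> rat_span_lattice F" "g \<notin> int_span F" "(\<lambda>i. u i + g i) \<in> nat_span A"
    using u unfolding defect_points_def by blast
  obtain D z where D: "D > 0" and z: "\<And>t. (\<lambda>i. t * z i) \<in> rat_span_lattice F"
    and zg: "\<And>j. (\<lambda>i. (1 + int j * int D) * z i - g i) \<in> nat_span F"
    using rat_span_lattice_line[OF finite_subset[OF FA A] g(1)] by blast
  have "inj (\<lambda>j::nat. 1 + int j * int D)"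
    using D by (auto simp: inj_on_def)
  then have T: "infinite (range (\<lambda>j::nat. 1 + int j * int D))"
    using finite_imageD infinite_UNIV_nat by blast
  have "op_act P (laurent_monom (\<lambda>i. u i + t * z i)) (\<lambda>i. v i + t * z i) = 0"
    if t_range: "t \<in> range (\<lambda>j::nat. 1 + int j * int D)" for t
  proof -
    obtain j where t: "t = 1 + int j * int D"
      using t_range by blast
    have "(\<lambda>i. (u i + g i) + (t * z i - g i)) \<in> nat_span A"
      using nat_span_add[OF g(3) nat_span_mono[OF A FA zg]] unfolding t .
    then have "op_act P (laurent_monom (\<lambda>i. u i + t * z i)) \<in> semigroup_ring A"
      using P laurent_monom_in_semigroup_ring unfolding diff_ops_RA_def by auto
    moreover have "(\<lambda>i. t * z i) \<notin> int_span F"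
    proof
      assume "(\<lambda>i. t * z i) \<in> int_span F"
      from int_span_diff[OF this] have "(\<lambda>i. t * z i - (t * z i - g i)) \<in> int_span F"
        using zg nat_span_subset_int_span unfolding t by blast
      with g(2) show False
        by simp
    qed
    then have "(\<lambda>i. v i + t * z i) \<notin> nat_span A"
      using v_notin v z[of t] unfolding defect_points_def by (auto intro!: bexI[of _ "\<lambda>i. t * z i"])
    ultimately show ?thesis
      unfolding semigroup_ring_iff by auto
  qed
  then have "op_act P (laurent_monom u) v = 0"
    by (rule op_act_coeff_vanishing_on_line[OF diff_ops_RA_finite_support[OF P] T])
  with nz show False
    by simp
qed

lemma zero_notin_defect_points_face:
  assumes A: "finite A" and w: "\<forall>a\<in>A. 0 \<le> vdot w (real_pt a)"
  shows "(\<lambda>_. 0) \<notin> defect_points A {a\<in>A. vdot w (real_pt a) = 0}"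
proof
  let ?F = "{a\<in>A. vdot w (real_pt a) = 0}"
  assume "(\<lambda>_. 0) \<in> defect_points A ?F"
  then obtain g where g: "g \<in> rat_span_lattice ?F" "g \<notin> int_span ?F" "g \<in> nat_span A"
    unfolding defect_points_def by auto
  have "vdot w (real_pt g) = 0"
    using vdot_real_pt_rat_span[OF g(1)] by simp
  then have "g \<in> nat_span ?F"
    using nat_span_face[OF A w g(3)] by simp
  with g(2) show False
    using nat_span_subset_int_span by blast
qed

lemma defect_points_nonempty:
  assumes "int_span A = UNIV" "rat_span_lattice F \<noteq> int_span F"
  obtains q where "q \<in> defect_points A F"
proof -
  obtain g where g: "g \<in> rat_span_lattice F" "g \<notin> int_span F"
    using assms(2) int_span_subset_rat_span by blast
  obtain q where "q \<in> nat_span A" "(\<lambda>i. q i + g i) \<in> nat_span A"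
    using int_span_shifted_into_nat_span[of g A] assms(1) by blast
  with g show ?thesis
    by (intro that[of q]) (unfold defect_points_def, blast)
qed

lemma not_graded_simple_if_face_unsaturated:
  fixes A :: "('n::finite \<Rightarrow> int) set"
  assumes A: "finite A" "int_span A = UNIV" and w: "\<forall>a\<in>A. 0 \<le> vdot w (real_pt a)"
    and unsaturated: "rat_span_lattice {a\<in>A. vdot w (real_pt a) = 0} \<noteq> int_span {a\<in>A. vdot w (real_pt a) = 0}"
  shows "\<not> graded_simple A"
proof
  assume simple: "graded_simple A"
  let ?S = "defect_points A {a\<in>A. vdot w (real_pt a) = 0}"
  let ?M = "{f \<in> semigroup_ring A. \<forall>m. f m \<noteq> 0 \<longrightarrow> m \<in> ?S}"
  have "graded_submodule A ?M"
    by (rule graded_submodule_supported_on, rule defect_points_closed[OF A(1)]) auto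
  then have M: "?M = {\<lambda>_. 0} \<or> ?M = semigroup_ring A"
    using simple unfolding graded_simple_def by blast
  obtain q where q: "q \<in> ?S"
    using defect_points_nonempty[OF A(2) unsaturated] .
  then have "laurent_monom q \<in> ?M"
    using laurent_monom_in_semigroup_ring unfolding defect_points_def by (auto simp: laurent_monom_def)
  then have "?M \<noteq> {\<lambda>_. 0}"
    using laurent_monom_nonzero by blast
  moreover have "laurent_monom (\<lambda>_. 0) \<notin> ?M"
    using zero_notin_defect_points_face[OF A(1) w] by (auto simp: laurent_monom_def)
  then have "?M \<noteq> semigroup_ring A"
    using laurent_monom_in_semigroup_ring[OF nat_span_zero] by blast
  ultimately show False
    using M by blast
qed

section \<open>Farkas' lemma\<close>

definition in_cone :: "('j \<Rightarrow> 'n \<Rightarrow> 'a::linordered_field) \<Rightarrow> 'j set \<Rightarrow> ('n \<Rightarrow> 'a) \<Rightarrow> bool" where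
  "in_cone g J y \<longleftrightarrow> (\<exists>\<mu>. (\<forall>j\<in>J. 0 \<le> \<mu> j) \<and> y = (\<lambda>i. \<Sum>j\<in>J. \<mu> j * g j i))"

lemma in_cone_insert:
  assumes "finite J" "j0 \<notin> J" "in_cone g J y"
  shows "in_cone g (insert j0 J) y"
proof -
  obtain \<mu> where \<mu>: "\<forall>j\<in>J. 0 \<le> \<mu> j" "y = (\<lambda>i. \<Sum>j\<in>J. \<mu> j * g j i)"
    using assms(3) unfolding in_cone_def by blast
  have "(\<Sum>j\<in>J. \<mu> j * g j i) = (\<Sum>j\<in>insert j0 J. (\<mu>(j0 := 0)) j * g j i)" for i
    using assms(1,2) by (auto intro: sum.cong)
  then show ?thesis
    unfolding in_cone_def using \<mu> by (intro exI[of _ "\<mu>(j0 := 0)"]) auto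
qed

text \<open>Fourier--Motzkin elimination of the generator \<open>g j0\<close>.\<close>
lemma in_cone_lift:
  assumes J: "finite J" "j0 \<notin> J" and \<alpha>: "vdot w (g j0) < 0"
    and w: "\<forall>j\<in>J. 0 \<le> vdot w (g j)" "vdot w y < 0"
    and proj: "in_cone (\<lambda>j i. g j i - (vdot w (g j) / vdot w (g j0)) * g j0 i) J
      (\<lambda>i. y i - (vdot w y / vdot w (g j0)) * g j0 i)"
  shows "in_cone g (insert j0 J) y"
proof -
  define \<alpha> where "\<alpha> = vdot w (g j0)"
  obtain \<mu> where \<mu>: "\<forall>j\<in>J. 0 \<le> \<mu> j" and y: "(\<lambda>i. y i - (vdot w y / \<alpha>) * g j0 i) =
      (\<lambda>i. \<Sum>j\<in>J. \<mu> j * (g j i - (vdot w (g j) / \<alpha>) * g j0 i))"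
    using proj unfolding in_cone_def \<alpha>_def by blast
  define \<beta> where "\<beta> = (vdot w y - (\<Sum>j\<in>J. \<mu> j * vdot w (g j))) / \<alpha>"
  have "0 \<le> (\<Sum>j\<in>J. \<mu> j * vdot w (g j))"
    using \<mu> w(1) by (intro sum_nonneg) auto
  then have \<beta>: "0 \<le> \<beta>"
    unfolding \<beta>_def \<alpha>_def using \<alpha> w(2) by (intro divide_nonpos_neg) auto
  have "y i = (\<Sum>j\<in>J. \<mu> j * g j i) + \<beta> * g j0 i" for i
  proof -
    have "y i = (\<Sum>j\<in>J. \<mu> j * (g j i - (vdot w (g j) / \<alpha>) * g j0 i)) + (vdot w y / \<alpha>) * g j0 i"
      using fun_cong[OF y, of i] by (simp add: algebra_simps)
    also have "\<dots> = (\<Sum>j\<in>J. \<mu> j * g j i) - (\<Sum>j\<in>J. \<mu> j * vdot w (g j)) / \<alpha> * g j0 i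
        + (vdot w y / \<alpha>) * g j0 i"
      by (simp add: algebra_simps sum_subtractf sum_distrib_left sum_divide_distrib sum_distrib_right)
    also have "\<dots> = (\<Sum>j\<in>J. \<mu> j * g j i) + \<beta> * g j0 i"
      unfolding \<beta>_def using \<alpha> \<alpha>_def by (simp add: field_simps)
    finally show ?thesis .
  qed
  moreover have "(\<Sum>j\<in>J. \<mu> j * g j i) = (\<Sum>j\<in>J. (\<mu>(j0 := \<beta>)) j * g j i)" for i
    using J by (intro sum.cong) auto
  ultimately have "y = (\<lambda>i. \<Sum>j\<in>insert j0 J. (\<mu>(j0 := \<beta>)) j * g j i)"
    using J by auto
  then show ?thesis
    unfolding in_cone_def using \<mu> \<beta> by (intro exI[of _ "\<mu>(j0 := \<beta>)"]) auto
qed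

lemma farkas_step:
  fixes g :: "'j \<Rightarrow> 'n::finite \<Rightarrow> 'a::linordered_field"
  assumes J: "finite J" "j0 \<notin> J" and not_in_cone: "\<not> in_cone g (insert j0 J) y"
    and IH: "\<And>(h :: 'j \<Rightarrow> 'n \<Rightarrow> 'a) y'. \<not> in_cone h J y' \<Longrightarrow> \<exists>w. (\<forall>j\<in>J. 0 \<le> vdot w (h j)) \<and> vdot w y' < 0"
    and w: "\<forall>j\<in>J. 0 \<le> vdot w (g j)" "vdot w y < 0" and \<alpha>: "vdot w (g j0) < 0"
  shows "\<exists>w. (\<forall>j\<in>insert j0 J. 0 \<le> vdot w (g j)) \<and> vdot w y < 0"
proof -
  define \<alpha> where "\<alpha> = vdot w (g j0)"
  define h where "h j = (\<lambda>i. g j i - (vdot w (g j) / \<alpha>) * g j0 i)" for j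
  define y' where "y' = (\<lambda>i. y i - (vdot w y / \<alpha>) * g j0 i)"
  have "\<not> in_cone h J y'"
    using in_cone_lift[OF J \<alpha> w] not_in_cone unfolding h_def y'_def \<alpha>_def by blast
  then obtain w' where w': "\<forall>j\<in>J. 0 \<le> vdot w' (h j)" "vdot w' y' < 0"
    using IH[of h y'] by blast
  define w'' where "w'' = (\<lambda>i. w' i - (vdot w' (g j0) / \<alpha>) * w i)"
  have w'': "vdot w'' v = vdot w' v - (vdot w' (g j0) / \<alpha>) * vdot w v" for v
    unfolding w''_def by (rule vdot_diff_left)
  have "vdot w'' (g j0) = 0"
    unfolding w'' using \<alpha> \<alpha>_def by simp
  moreover have "vdot w'' (g j) = vdot w' (h j)" for j
    unfolding w'' h_def vdot_diff_right by (simp add: field_simps)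
  moreover have "vdot w'' y = vdot w' y'"
    unfolding w'' y'_def vdot_diff_right by (simp add: field_simps)
  ultimately show ?thesis
    using w' by (intro exI[of _ w'']) auto
qed

lemma farkas_lemma:
  fixes g :: "'j \<Rightarrow> 'n::finite \<Rightarrow> 'a::linordered_field"
  assumes "finite J" "\<not> in_cone g J y"
  shows "\<exists>w. (\<forall>j\<in>J. 0 \<le> vdot w (g j)) \<and> vdot w y < 0"
  using assms
proof (induction J arbitrary: g y rule: finite_induct)
  case empty
  then have "y \<noteq> (\<lambda>i. 0)"
    unfolding in_cone_def by auto
  then have "vdot (\<lambda>i. 0 - 1 * y i) y < 0"
    using vdot_self_pos[of y] by (simp add: vdot_def sum_negf)
  then show ?case
    by blast
next
  case (insert j0 J)
  obtain w where w: "\<forall>j\<in>J. 0 \<le> vdot w (g j)" "vdot w y < 0"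
    using insert.IH insert.prems in_cone_insert[OF insert.hyps] by blast
  show ?case
  proof (cases "0 \<le> vdot w (g j0)")
    case True
    then show ?thesis
      using w by (intro exI[of _ w]) auto
  next
    case False
    then show ?thesis
      using farkas_step[OF insert.hyps insert.prems insert.IH w] by simp
  qed
qed

lemma farkas_lemma_span:
  fixes g :: "'j \<Rightarrow> 'n::finite \<Rightarrow> 'a::linordered_field"
  assumes J: "finite J" and y: "\<not> (\<exists>\<mu>. y = (\<lambda>i. \<Sum>j\<in>J. \<mu> j * g j i))"
  shows "\<exists>w. (\<forall>j\<in>J. vdot w (g j) = 0) \<and> vdot w y \<noteq> 0"
proof -
  define signed where "signed = (\<lambda>(j, s) i. if s then g j i else - g j i)"
  have sum_pm: "(\<Sum>js\<in>J \<times> UNIV. \<mu> js * signed js i) = (\<Sum>j\<in>J. (\<mu> (j, True) - \<mu> (j, False)) * g j i)"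
    for \<mu> i
  proof -
    have "(\<Sum>js\<in>J \<times> UNIV. \<mu> js * signed js i) = (\<Sum>j\<in>J. \<Sum>s\<in>UNIV. \<mu> (j, s) * signed (j, s) i)"
      by (simp add: sum.cartesian_product)
    also have "\<dots> = (\<Sum>j\<in>J. (\<mu> (j, True) - \<mu> (j, False)) * g j i)"
      by (intro sum.cong) (auto simp: UNIV_bool signed_def algebra_simps)
    finally show ?thesis .
  qed
  have not_in_cone: "\<not> in_cone signed (J \<times> UNIV) y"
  proof
    assume "in_cone signed (J \<times> UNIV) y"
    then obtain \<mu> where "y = (\<lambda>i. \<Sum>js\<in>J \<times> UNIV. \<mu> js * signed js i)"
      unfolding in_cone_def by blast
    then have "y = (\<lambda>i. \<Sum>j\<in>J. (\<mu> (j, True) - \<mu> (j, False)) * g j i)"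
      unfolding sum_pm .
    with y show False
      by (auto intro: exI[of _ "\<lambda>j. \<mu> (j, True) - \<mu> (j, False)"])
  qed
  then obtain w where w: "\<forall>js\<in>J \<times> UNIV. 0 \<le> vdot w (signed js)" "vdot w y < 0"
    using farkas_lemma[OF _ not_in_cone] J by auto
  have "vdot w (g j) = 0" if "j \<in> J" for j
  proof -
    have "0 \<le> vdot w (signed (j, True))" "0 \<le> vdot w (signed (j, False))"
      using w(1) that by auto
    then show ?thesis
      unfolding signed_def by (simp add: vdot_uminus_right)
  qed
  then show ?thesis
    using w(2) by (intro exI[of _ w]) auto
qed

lemma rat_span_lattice_separating_functionals:
  fixes F :: "'i \<Rightarrow> ('n::finite \<Rightarrow> int) set"
  assumes "\<And>\<iota>. \<iota> \<in> I \<Longrightarrow> finite (F \<iota>)" "\<And>\<iota>. \<iota> \<in> I \<Longrightarrow> v \<iota> \<notin> rat_span_lattice (F \<iota>)"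
  obtains W where "\<And>\<iota>. \<iota> \<in> I \<Longrightarrow> \<forall>a\<in>F \<iota>. vdot (W \<iota>) (rat_vec a) = 0"
    "\<And>\<iota>. \<iota> \<in> I \<Longrightarrow> vdot (W \<iota>) (rat_vec (v \<iota>)) \<noteq> 0"
proof -
  have "\<forall>\<iota>\<in>I. \<exists>W. (\<forall>a\<in>F \<iota>. vdot W (rat_vec a) = 0) \<and> vdot W (rat_vec (v \<iota>)) \<noteq> 0"
    using farkas_lemma_span[of "F _" _ rat_vec] assms by (simp add: rat_span_lattice_iff)
  then obtain W where "\<forall>\<iota>\<in>I. (\<forall>a\<in>F \<iota>. vdot (W \<iota>) (rat_vec a) = 0) \<and> vdot (W \<iota>) (rat_vec (v \<iota>)) \<noteq> 0"
    by (rule bchoice[elim_format]) blast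
  then show ?thesis
    using that by blast
qed

definition rat_face :: "('n::finite \<Rightarrow> int) set \<Rightarrow> ('n \<Rightarrow> int) set \<Rightarrow> bool" where
  "rat_face A F \<longleftrightarrow> (\<exists>W. (\<forall>a\<in>A. 0 \<le> vdot W (rat_vec a)) \<and> F = {a\<in>A. vdot W (rat_vec a) = 0})"

lemma rat_face_subset: "rat_face A F \<Longrightarrow> F \<subseteq> A"
  unfolding rat_face_def by auto

lemma rat_face_whole: "rat_face A A"
  unfolding rat_face_def by (rule exI[of _ "\<lambda>_. 0"]) (simp add: vdot_def)

lemma rat_face_of_face:
  assumes A: "finite A" and F: "rat_face A F" and W': "\<forall>a\<in>F. 0 \<le> vdot W' (rat_vec a)"
  shows "rat_face A {a\<in>F. vdot W' (rat_vec a) = 0}"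
proof -
  obtain W\<^sub>F where WF: "\<forall>a\<in>A. 0 \<le> vdot W\<^sub>F (rat_vec a)" "F = {a\<in>A. vdot W\<^sub>F (rat_vec a) = 0}"
    using F unfolding rat_face_def by blast
  have pos: "0 < vdot W\<^sub>F (rat_vec a)" if "a \<in> A - F" for a
    using that WF by force
  define M where "M = 1 + (\<Sum>a\<in>A - F. \<bar>vdot W' (rat_vec a)\<bar> / vdot W\<^sub>F (rat_vec a))"
  define W where "W = (\<lambda>i. W' i + M * W\<^sub>F i)"
  have W: "vdot W v = vdot W' v + M * vdot W\<^sub>F v" for v
    unfolding W_def by (rule vdot_add_left)
  have outside: "0 < vdot W (rat_vec a)" if a: "a \<in> A - F" for a
  proof -
    let ?p = "vdot W\<^sub>F (rat_vec a)" and ?q = "\<bar>vdot W' (rat_vec a)\<bar>"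
    have "?q / ?p \<le> (\<Sum>a\<in>A - F. \<bar>vdot W' (rat_vec a)\<bar> / vdot W\<^sub>F (rat_vec a))"
      using A a pos by (intro member_le_sum) (auto intro!: divide_nonneg_pos)
    then have "(1 + ?q / ?p) * ?p \<le> M * ?p"
      unfolding M_def using pos[OF a] by (intro mult_right_mono) auto
    moreover have "(1 + ?q / ?p) * ?p = ?p + ?q"
      using pos[OF a] by (simp add: field_simps)
    ultimately show ?thesis
      unfolding W using pos[OF a] by linarith
  qed
  have inside: "vdot W (rat_vec a) = vdot W' (rat_vec a)" if "a \<in> F" for a
    using that WF(2) W by simp
  have "\<forall>a\<in>A. 0 \<le> vdot W (rat_vec a)"
    using outside inside W' by (metis DiffI less_imp_le)
  moreover have "{a\<in>F. vdot W' (rat_vec a) = 0} = {a\<in>A. vdot W (rat_vec a) = 0}"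
  proof (intro set_eqI iffI)
    fix a
    assume "a \<in> {a\<in>A. vdot W (rat_vec a) = 0}"
    moreover from this have "a \<in> F"
      using outside by (metis (mono_tags, lifting) DiffI less_irrefl mem_Collect_eq)
    ultimately show "a \<in> {a\<in>F. vdot W' (rat_vec a) = 0}"
      using inside by simp
  qed (use inside WF(2) in auto)
  ultimately show ?thesis
    unfolding rat_face_def by blast
qed

definition smallest_face :: "('n::finite \<Rightarrow> int) set \<Rightarrow> ('n \<Rightarrow> int) set \<Rightarrow> ('n \<Rightarrow> int) set \<Rightarrow> bool" where
  "smallest_face A B F \<longleftrightarrow> rat_face A F \<and> B \<subseteq> F \<and> (\<forall>F'. rat_face A F' \<and> B \<subseteq> F' \<longrightarrow> card F \<le> card F')"

lemma smallest_face_exists: "B \<subseteq> A \<Longrightarrow> \<exists>F. smallest_face A B F"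
  unfolding smallest_face_def using ex_has_least_nat[of "\<lambda>F. rat_face A F \<and> B \<subseteq> F" A card] rat_face_whole
  by blast

lemma smallest_face_subset:
  assumes "smallest_face A B F"
  shows "F \<subseteq> A" "B \<subseteq> F"
  using assms rat_face_subset unfolding smallest_face_def by auto

lemma farkas_relative_interior:
  fixes F B :: "('n::finite \<Rightarrow> int) set"
  assumes Ff: "finite F" and BF: "B \<subseteq> F"
    and not_absorbed: "\<not> (\<exists>t \<mu>. 0 \<le> t \<and> (\<forall>a\<in>F. 0 \<le> \<mu> a) \<and>
      (\<lambda>i. t * (\<Sum>a\<in>B. rat_vec a i) - rat_vec b i) = (\<lambda>i. \<Sum>a\<in>F. \<mu> a * rat_vec a i))"
  shows "\<exists>W. (\<forall>a\<in>F. 0 \<le> vdot W (rat_vec a)) \<and> (\<forall>a\<in>B. vdot W (rat_vec a) = 0) \<and>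
    0 < vdot W (rat_vec b)"
proof -
  define e where "e = (\<lambda>i. \<Sum>a\<in>B. rat_vec a i)"
  define g where "g j = (case j of None \<Rightarrow> (\<lambda>i. - e i) | Some a \<Rightarrow> rat_vec a)" for j
  have sum_g: "(\<Sum>j\<in>insert None (Some ` F). \<mu> j * g j i) = \<mu> None * (- e i) + (\<Sum>a\<in>F. \<mu> (Some a) * rat_vec a i)"
    for \<mu> i
    using Ff by (simp add: sum.reindex g_def)
  have not_in_cone: "\<not> in_cone g (insert None (Some ` F)) (\<lambda>i. - rat_vec b i)"
  proof
    assume "in_cone g (insert None (Some ` F)) (\<lambda>i. - rat_vec b i)"
    then obtain \<mu> where \<mu>: "\<forall>j\<in>insert None (Some ` F). 0 \<le> \<mu> j"
      "(\<lambda>i. - rat_vec b i) = (\<lambda>i. \<Sum>j\<in>insert None (Some ` F). \<mu> j * g j i)"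
      unfolding in_cone_def by blast
    then have "(\<lambda>i. \<mu> None * e i - rat_vec b i) = (\<lambda>i. \<Sum>a\<in>F. (\<mu> \<circ> Some) a * rat_vec a i)"
      by (auto simp: sum_g fun_eq_iff algebra_simps)
    moreover have "0 \<le> \<mu> None" "\<forall>a\<in>F. 0 \<le> (\<mu> \<circ> Some) a"
      using \<mu>(1) by auto
    ultimately show False
      using not_absorbed unfolding e_def by blast
  qed
  then obtain W where W: "\<forall>j\<in>insert None (Some ` F). 0 \<le> vdot W (g j)" "vdot W (\<lambda>i. - rat_vec b i) < 0"
    using farkas_lemma[OF _ not_in_cone] Ff by auto
  have WF: "\<forall>a\<in>F. 0 \<le> vdot W (rat_vec a)" and "0 \<le> vdot W (\<lambda>i. - e i)"
    using W(1) unfolding g_def by auto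
  then have "(\<Sum>a\<in>B. vdot W (rat_vec a)) \<le> 0"
    using vdot_sum[of W "\<lambda>_. 1" "\<lambda>a. rat_vec a" B] unfolding e_def vdot_uminus_right by simp
  moreover have B_nonneg: "\<forall>a\<in>B. 0 \<le> vdot W (rat_vec a)"
    using WF BF by blast
  then have "0 \<le> (\<Sum>a\<in>B. vdot W (rat_vec a))"
    by (intro sum_nonneg) blast
  ultimately have "(\<Sum>a\<in>B. vdot W (rat_vec a)) = 0"
    by linarith
  then have "\<forall>a\<in>B. vdot W (rat_vec a) = 0"
    using sum_nonneg_eq_0_iff[OF finite_subset[OF BF Ff], of "\<lambda>a. vdot W (rat_vec a)"] B_nonneg
    by simp
  moreover have "0 < vdot W (rat_vec b)"
    using W(2) unfolding vdot_uminus_right by simp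
  ultimately show ?thesis
    using WF by blast
qed

text \<open>The sum of \<open>B\<close> lies in the relative interior of the smallest face containing \<open>B\<close>:
  otherwise a supporting hyperplane of that face cuts out a smaller face still containing \<open>B\<close>.\<close>
lemma smallest_face_absorbs_rat:
  assumes A: "finite A" and F: "smallest_face A B F" and b: "b \<in> F"
  shows "\<exists>t \<mu>. 0 \<le> t \<and> (\<forall>a\<in>F. 0 \<le> \<mu> a) \<and>
     (\<lambda>i. t * (\<Sum>a\<in>B. rat_vec a i) - rat_vec b i) = (\<lambda>i. \<Sum>a\<in>F. \<mu> a * rat_vec a i)"
proof (rule ccontr)
  assume not_absorbed: "\<not> ?thesis"
  have face: "rat_face A F" "B \<subseteq> F" and least: "\<And>F'. rat_face A F' \<Longrightarrow> B \<subseteq> F' \<Longrightarrow> card F \<le> card F'"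
    using F unfolding smallest_face_def by auto
  have Ff: "finite F"
    using A rat_face_subset[OF face(1)] finite_subset by blast
  obtain W where WF: "\<forall>a\<in>F. 0 \<le> vdot W (rat_vec a)" and WB: "\<forall>a\<in>B. vdot W (rat_vec a) = 0"
    and Wb: "0 < vdot W (rat_vec b)"
    using farkas_relative_interior[OF Ff face(2) not_absorbed] by blast
  let ?F' = "{a\<in>F. vdot W (rat_vec a) = 0}"
  have "card F \<le> card ?F'"
    using least rat_face_of_face[OF A face(1) WF] WB face(2) by blast
  moreover have "b \<notin> ?F'"
    using Wb by simp
  then have "card ?F' < card F"
    using b Ff by (intro psubset_card_mono) auto
  ultimately show False
    by simp
qed

lemma smallest_face_absorbs:
  assumes A: "finite A" and F: "smallest_face A B F" and b: "b \<in> F"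
  shows "\<exists>N::nat. (\<lambda>i. int N * (\<Sum>a\<in>B. a i) - b i) \<in> nat_span F"
proof -
  obtain t \<mu> where t: "0 \<le> t" and \<mu>: "\<forall>a\<in>F. 0 \<le> \<mu> a"
    and eq: "(\<lambda>i. t * (\<Sum>a\<in>B. rat_vec a i) - rat_vec b i) = (\<lambda>i. \<Sum>a\<in>F. \<mu> a * rat_vec a i)"
    using smallest_face_absorbs_rat[OF assms] by blast
  have Ff: "finite F"
    using finite_subset[OF smallest_face_subset(1)[OF F] A] .
  obtain D :: nat where D: "D > 0" "\<forall>x\<in>insert t (\<mu> ` F). \<exists>k::int. of_nat D * x = of_int k"
    using rat_common_denominator[of "insert t (\<mu> ` F)"] Ff by auto
  then obtain k\<^sub>t where kt: "of_nat D * t = of_int k\<^sub>t"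
    by auto
  have "\<forall>a\<in>F. \<exists>k::int. of_nat D * \<mu> a = of_int k"
    using D(2) by auto
  then obtain k where k: "\<forall>a\<in>F. of_nat D * \<mu> a = of_int (k a)"
    by (rule bchoice[elim_format]) blast
  have kt_nonneg: "0 \<le> k\<^sub>t"
    using kt t by (metis of_int_0_le_iff of_nat_0_le_iff zero_le_mult_iff)
  have k_nonneg: "0 \<le> k a" if "a \<in> F" for a
    using k \<mu> that by (metis of_int_0_le_iff of_nat_0_le_iff zero_le_mult_iff)
  have int_eq: "k\<^sub>t * (\<Sum>a\<in>B. a i) - int D * b i = (\<Sum>a\<in>F. k a * a i)" for i
  proof -
    have "rat_of_int (k\<^sub>t * (\<Sum>a\<in>B. a i) - int D * b i) = of_nat D * (t * (\<Sum>a\<in>B. rat_vec a i) - rat_vec b i)"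
      using kt unfolding rat_vec_def by (simp add: algebra_simps)
    also have "\<dots> = (\<Sum>a\<in>F. (of_nat D * \<mu> a) * rat_vec a i)"
      using fun_cong[OF eq, of i] by (simp add: sum_distrib_left mult.assoc)
    also have "\<dots> = rat_of_int (\<Sum>a\<in>F. k a * a i)"
      using k by (simp add: rat_vec_def)
    finally show ?thesis
      by (simp only: of_int_eq_iff)
  qed
  have "int (nat k\<^sub>t) * (\<Sum>a\<in>B. a i) - b i = int (D - 1) * b i + (\<Sum>a\<in>F. int (nat (k a)) * a i)" for i
  proof -
    have "(\<Sum>a\<in>F. int (nat (k a)) * a i) = (\<Sum>a\<in>F. k a * a i)"
      using k_nonneg by (intro sum.cong) auto
    then show ?thesis
      using int_eq[of i] kt_nonneg D(1) by (simp add: of_nat_diff algebra_simps)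
  qed
  then have "(\<lambda>i. int (nat k\<^sub>t) * (\<Sum>a\<in>B. a i) - b i) =
      (\<lambda>i. int (D - 1) * b i + (\<Sum>a\<in>F. int (nat (k a)) * a i))"
    by simp
  moreover have "(\<lambda>i. int (D - 1) * b i + (\<Sum>a\<in>F. int (nat (k a)) * a i)) \<in> nat_span F"
    by (intro nat_span_add nat_span_scale mem_nat_span[OF Ff b] nat_span_of_nat_coeffs)
  ultimately show ?thesis
    by (intro exI[of _ "nat k\<^sub>t"]) (simp only:)
qed

lemma smallest_face_absorbs_multiple:
  assumes A: "finite A" and F: "smallest_face A B F" and b: "b \<in> F"
  shows "\<exists>N::nat. (\<lambda>i. int N * (\<Sum>a\<in>B. a i) + z * b i) \<in> nat_span F"
proof (cases "0 \<le> z")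
  case True
  have "(\<lambda>i. int (nat z) * b i) \<in> nat_span F"
    using nat_span_scale[OF mem_nat_span[OF finite_subset[OF smallest_face_subset(1)[OF F] A] b]] .
  then show ?thesis
    using True by (intro exI[of _ 0]) simp
next
  case False
  obtain N where N: "(\<lambda>i. int N * (\<Sum>a\<in>B. a i) - b i) \<in> nat_span F"
    using smallest_face_absorbs[OF assms] by blast
  have "(\<lambda>i. int (nat (- z)) * (int N * (\<Sum>a\<in>B. a i) - b i)) \<in> nat_span F"
    using nat_span_scale[OF N] .
  then show ?thesis
    using False by (intro exI[of _ "nat (- z) * N"]) (simp add: algebra_simps)
qed

text \<open>Saturation of the smallest face \<open>F\<close> containing \<open>B\<close> turns a rational relation into an
  integral one, and large multiples of the elements of \<open>B\<close> absorb its negative coefficients.\<close>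
lemma smallest_face_eventually_nat_span:
  assumes A: "finite A" and F: "smallest_face A B F"
    and saturated: "rat_span_lattice F = int_span F" and y: "y \<in> rat_span_lattice F"
  shows "eventually (\<lambda>T. \<forall>n. (\<forall>a\<in>B. T \<le> n a) \<longrightarrow>
      (\<lambda>i. (\<Sum>a\<in>B. int (n a) * a i) + y i) \<in> nat_span F) sequentially"
proof -
  have Ff: "finite F" and BF: "B \<subseteq> F"
    using finite_subset[OF smallest_face_subset(1)[OF F] A] smallest_face_subset(2)[OF F] .
  obtain z where z: "y = (\<lambda>i. \<Sum>b\<in>F. z b * b i)"
    using y saturated unfolding int_span_def by blast
  have "\<forall>b\<in>F. \<exists>N::nat. (\<lambda>i. int N * (\<Sum>a\<in>B. a i) + z b * b i) \<in> nat_span F"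
    using smallest_face_absorbs_multiple[OF A F] by blast
  then obtain N where N: "\<forall>b\<in>F. (\<lambda>i. int (N b) * (\<Sum>a\<in>B. a i) + z b * b i) \<in> nat_span F"
    by (rule bchoice[elim_format]) blast
  define T where "T = (\<Sum>b\<in>F. N b)"
  have "(\<lambda>i. (\<Sum>a\<in>B. int (n a) * a i) + y i) \<in> nat_span F" if n: "\<forall>a\<in>B. T \<le> n a" for n
  proof -
    have "(\<Sum>a\<in>B. int (n a) * a i) = (\<Sum>a\<in>B. int (n a - T) * a i) + int T * (\<Sum>a\<in>B. a i)" for i
      using n by (simp add: sum_distrib_left sum.distrib[symmetric] of_nat_diff algebra_simps)
    then have "(\<lambda>i. (\<Sum>a\<in>B. int (n a) * a i) + y i) = (\<lambda>i. (\<Sum>a\<in>B. int (n a - T) * a i) +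
        (\<Sum>b\<in>F. int (N b) * (\<Sum>a\<in>B. a i) + z b * b i))"
      unfolding z T_def by (simp add: sum.distrib sum_distrib_right add.assoc)
    also have "\<dots> \<in> nat_span F"
      by (rule nat_span_add[OF nat_span_mono[OF Ff BF nat_span_of_nat_coeffs] nat_span_sum[OF Ff]])
        (use N in blast)
    finally show ?thesis .
  qed
  then show ?thesis
    unfolding eventually_sequentially by (intro exI[of _ T]) (meson order_trans)
qed

lemma real_pt_in_real_cone:
  assumes "finite A" "a \<in> A"
  shows "real_pt a \<in> real_cone A"
proof -
  have "(\<Sum>b\<in>A. (if b = a then 1 else 0) * real_of_int (b i)) = (\<Sum>b\<in>A. if b = a then real_of_int (a i) else 0)"
    for i by (intro sum.cong) auto
  then have "real_pt a = (\<lambda>i. \<Sum>b\<in>A. (if b = a then 1 else 0) * of_int (b i))"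
    using assms by (simp add: real_pt_def)
  then show ?thesis
    unfolding real_cone_def by (intro CollectI exI[of _ "\<lambda>b. if b = a then 1 else 0"]) auto
qed

lemma real_face_points:
  assumes A: "finite A" and \<tau>: "is_face (real_cone A) \<tau>"
  obtains w where "\<forall>a\<in>A. 0 \<le> vdot w (real_pt a)"
    "{a\<in>A. real_pt a \<in> \<tau>} = {a\<in>A. vdot w (real_pt a) = 0}"
proof -
  obtain w where "\<forall>x\<in>real_cone A. 0 \<le> vdot w x" "\<tau> = {x\<in>real_cone A. vdot w x = 0}"
    using \<tau> unfolding is_face_def vdot_def by blast
  then show ?thesis
    using that real_pt_in_real_cone[OF A] by auto
qed

lemma rat_face_real_face:
  assumes A: "finite A" and F: "rat_face A F"
  obtains \<tau> where "is_face (real_cone A) \<tau>" "{a\<in>A. real_pt a \<in> \<tau>} = F"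
proof -
  obtain W where W: "\<forall>a\<in>A. 0 \<le> vdot W (rat_vec a)" "F = {a\<in>A. vdot W (rat_vec a) = 0}"
    using F unfolding rat_face_def by blast
  define w where "w = (\<lambda>i. real_of_rat (W i))"
  have w: "vdot w (real_pt a) = of_rat (vdot W (rat_vec a))" for a
    unfolding w_def vdot_def real_pt_def rat_vec_def by (simp add: of_rat_sum of_rat_mult)
  have "0 \<le> vdot w x" if x: "x \<in> real_cone A" for x
  proof -
    obtain l where l: "\<forall>a\<in>A. 0 \<le> l a" "x = (\<lambda>i. \<Sum>a\<in>A. l a * of_int (a i))"
      using x unfolding real_cone_def by blast
    then have "vdot w x = (\<Sum>a\<in>A. l a * vdot w (real_pt a))"
      unfolding real_pt_def by (simp add: vdot_sum)
    also have "\<dots> \<ge> 0"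
      using l(1) W(1) unfolding w by (intro sum_nonneg mult_nonneg_nonneg) auto
    finally show ?thesis .
  qed
  then have "is_face (real_cone A) {x\<in>real_cone A. vdot w x = 0}"
    unfolding is_face_def vdot_def by (intro exI[of _ w]) simp
  moreover have "{a\<in>A. real_pt a \<in> {x\<in>real_cone A. vdot w x = 0}} = F"
    using W(2) real_pt_in_real_cone[OF A] by (auto simp: w)
  ultimately show ?thesis
    using that by blast
qed

section \<open>Holes lie on finitely many hyperplanes\<close>

definition bounded_combinations :: "('n \<Rightarrow> int) set \<Rightarrow> nat \<Rightarrow> ('n \<Rightarrow> int) set" where
  "bounded_combinations S K = (\<lambda>n i. \<Sum>a\<in>S. int (n a) * a i) ` (S \<rightarrow>\<^sub>E {..<K})"

lemma finite_bounded_combinations: "finite S \<Longrightarrow> finite (bounded_combinations S K)"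
  unfolding bounded_combinations_def by (intro finite_imageI finite_PiE) auto

lemma bounded_combinationsI:
  assumes "\<forall>a\<in>S. n a < K"
  shows "(\<lambda>i. \<Sum>a\<in>S. int (n a) * a i) \<in> bounded_combinations S K"
proof -
  have "restrict n S \<in> S \<rightarrow>\<^sub>E {..<K}"
    using assms by auto
  moreover have "(\<lambda>i. \<Sum>a\<in>S. int (n a) * a i) = (\<lambda>i. \<Sum>a\<in>S. int (restrict n S a) * a i)"
    by (intro ext sum.cong) auto
  ultimately show ?thesis
    unfolding bounded_combinations_def by blast
qed

lemma uniform_threshold:
  fixes A :: "('n::finite \<Rightarrow> int) set"
  assumes A: "finite A" and saturated: "\<And>F. rat_face A F \<Longrightarrow> rat_span_lattice F = int_span F"
    and face: "\<And>B. B \<subseteq> A \<Longrightarrow> smallest_face A B (face B)"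
  shows "\<exists>K'\<ge>K. \<forall>B\<subseteq>A. \<forall>q\<in>bounded_combinations (A - B) K.
    (\<lambda>i. q i - m i) \<in> rat_span_lattice (face B) \<longrightarrow>
    (\<forall>n. (\<forall>a\<in>B. K' \<le> n a) \<longrightarrow> (\<lambda>i. (\<Sum>a\<in>B. int (n a) * a i) + (q i - m i)) \<in> nat_span A)"
proof -
  define good where "good T B q \<longleftrightarrow> ((\<lambda>i. q i - m i) \<in> rat_span_lattice (face B) \<longrightarrow>
    (\<forall>n. (\<forall>a\<in>B. T \<le> n a) \<longrightarrow> (\<lambda>i. (\<Sum>a\<in>B. int (n a) * a i) + (q i - m i)) \<in> nat_span A))"
    for T B q
  let ?X = "Sigma (Pow A) (\<lambda>B. bounded_combinations (A - B) K)"
  have "finite ?X"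
    using A by (intro finite_SigmaI finite_bounded_combinations) auto
  moreover have "\<forall>x\<in>?X. eventually (\<lambda>T. good T (fst x) (snd x)) sequentially"
  proof
    fix x
    assume "x \<in> ?X"
    then have B: "fst x \<subseteq> A"
      by auto
    show "eventually (\<lambda>T. good T (fst x) (snd x)) sequentially"
    proof (cases "(\<lambda>i. snd x i - m i) \<in> rat_span_lattice (face (fst x))")
      case True
      from face[OF B] have "rat_span_lattice (face (fst x)) = int_span (face (fst x))"
        using saturated unfolding smallest_face_def by blast
      from smallest_face_eventually_nat_span[OF A face[OF B] this True]
      show ?thesis
        unfolding good_def
        by eventually_elim (use nat_span_mono[OF A smallest_face_subset(1)[OF face[OF B]]] in blast)
    qed (simp add: good_def)
  qed
  ultimately have "eventually (\<lambda>T. K \<le> T \<and> (\<forall>x\<in>?X. good T (fst x) (snd x))) sequentially"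
    by (intro eventually_conj eventually_ge_at_top eventually_ball_finite)
  then obtain T where "K \<le> T" "\<forall>x\<in>?X. good T (fst x) (snd x)"
    unfolding eventually_sequentially by auto
  then show ?thesis
    unfolding good_def by (intro exI[of _ T]) auto
qed

lemma threshold_sequence:
  fixes A :: "('n::finite \<Rightarrow> int) set"
  assumes A: "finite A" and saturated: "\<And>F. rat_face A F \<Longrightarrow> rat_span_lattice F = int_span F"
    and face: "\<And>B. B \<subseteq> A \<Longrightarrow> smallest_face A B (face B)"
  obtains K :: "nat \<Rightarrow> nat" where "mono K"
    "\<And>i B q n. B \<subseteq> A \<Longrightarrow> q \<in> bounded_combinations (A - B) (K i) \<Longrightarrow>
      (\<lambda>j. q j - m j) \<in> rat_span_lattice (face B) \<Longrightarrow> \<forall>a\<in>B. K (Suc i) \<le> n a \<Longrightarrow>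
      (\<lambda>j. (\<Sum>a\<in>B. int (n a) * a j) + (q j - m j)) \<in> nat_span A"
proof -
  from choice[OF allI[OF uniform_threshold[OF A saturated face]]]
  obtain next_K where next_K: "\<forall>K. K \<le> next_K K \<and> (\<forall>B\<subseteq>A. \<forall>q\<in>bounded_combinations (A - B) K.
    (\<lambda>i. q i - m i) \<in> rat_span_lattice (face B) \<longrightarrow>
    (\<forall>n. (\<forall>a\<in>B. next_K K \<le> n a) \<longrightarrow> (\<lambda>i. (\<Sum>a\<in>B. int (n a) * a i) + (q i - m i)) \<in> nat_span A))" ..
  define K where "K i = (next_K ^^ i) 0" for i
  have K_Suc: "K (Suc i) = next_K (K i)" for i
    unfolding K_def by simp
  show ?thesis
  proof (rule that)
    show "mono K"
      unfolding mono_iff_le_Suc K_Suc using next_K by blast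
  next
    fix i B q n
    assume "B \<subseteq> A" "q \<in> bounded_combinations (A - B) (K i)"
      "(\<lambda>j. q j - m j) \<in> rat_span_lattice (face B)" "\<forall>a\<in>B. K (Suc i) \<le> n a"
    then show "(\<lambda>j. (\<Sum>a\<in>B. int (n a) * a j) + (q j - m j)) \<in> nat_span A"
      using next_K unfolding K_Suc by blast
  qed
qed

lemma pigeonhole_gap:
  fixes K :: "nat \<Rightarrow> nat" and n :: "'a \<Rightarrow> nat"
  assumes A: "finite A" and K: "mono K"
  shows "\<exists>i\<le>card A. \<forall>a\<in>A. \<not> (K i \<le> n a \<and> n a < K (Suc i))"
proof (rule ccontr)
  assume no_gap: "\<not> ?thesis"
  define f where "f a = (LEAST i. n a < K (Suc i))" for a
  have "{..card A} \<subseteq> f ` A"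
  proof
    fix i
    assume "i \<in> {..card A}"
    then obtain a where a: "a \<in> A" "K i \<le> n a" "n a < K (Suc i)"
      using no_gap by auto
    have "f a = i"
      unfolding f_def
    proof (rule Least_equality)
      show "i \<le> j" if "n a < K (Suc j)" for j
        using a(2) that monoD[OF K, of "Suc j" i] by (cases "i \<le> j") auto
    qed (rule a(3))
    then show "i \<in> f ` A"
      using a(1) by blast
  qed
  then have "card {..card A} \<le> card (f ` A)"
    using A by (intro card_mono) auto
  also have "\<dots> \<le> card A"
    using A by (rule card_image_le)
  finally show False
    by simp
qed

lemma gap_decomposition:
  assumes A: "finite A" and K: "mono K"
  obtains i B where "i \<le> card A" "B \<subseteq> A" "\<forall>a\<in>B. K (Suc i) \<le> n a"
    "(\<lambda>j. \<Sum>a\<in>A - B. int (n a) * a j) \<in> bounded_combinations (A - B) (K i)"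
proof -
  obtain i where i: "i \<le> card A" "\<forall>a\<in>A. \<not> (K i \<le> n a \<and> n a < K (Suc i))"
    using pigeonhole_gap[OF A K] by blast
  let ?B = "{a\<in>A. K (Suc i) \<le> n a}"
  have "\<forall>a\<in>A - ?B. n a < K i"
    using i(2) by auto
  then show ?thesis
    using i(1) by (intro that[of i ?B] bounded_combinationsI) auto
qed

text \<open>Split \<open>x = \<Sum> n\<^sub>a a\<close> at a gap of the thresholds into the part over \<open>B\<close>, where the
  coefficients are large, and a bounded part \<open>q\<close>. If \<open>q - m\<close> were in the rational span of the
  face containing \<open>B\<close>, then \<open>x - m \<in> \<nat>A\<close>; so any linear form vanishing on that face takes
  the same value at \<open>x\<close> and at \<open>q\<close>.\<close>
lemma hole_decomposition:
  fixes A :: "('n::finite \<Rightarrow> int) set"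
  assumes A: "finite A" and K: "mono K" and face: "\<And>B. B \<subseteq> A \<Longrightarrow> B \<subseteq> face B"
    and large: "\<And>i B q n. B \<subseteq> A \<Longrightarrow> q \<in> bounded_combinations (A - B) (K i) \<Longrightarrow>
      (\<lambda>j. q j - m j) \<in> rat_span_lattice (face B) \<Longrightarrow> \<forall>a\<in>B. K (Suc i) \<le> n a \<Longrightarrow>
      (\<lambda>j. (\<Sum>a\<in>B. int (n a) * a j) + (q j - m j)) \<in> nat_span A"
    and x: "x \<in> nat_span A" and hole: "(\<lambda>i. x i - m i) \<notin> nat_span A"
  obtains i B q where "i \<le> card A" "B \<subseteq> A" "q \<in> bounded_combinations (A - B) (K i)"
    "(\<lambda>j. q j - m j) \<notin> rat_span_lattice (face B)"
    "\<forall>W. (\<forall>a\<in>face B. vdot W (rat_vec a) = 0) \<longrightarrow> vdot W (rat_vec x) = vdot W (rat_vec q)"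
proof -
  obtain n where n: "x = (\<lambda>j. \<Sum>a\<in>A. int (n a) * a j)"
    using x unfolding nat_span_def by blast
  obtain i B where i: "i \<le> card A" and B: "B \<subseteq> A" "\<forall>a\<in>B. K (Suc i) \<le> n a"
    and q: "(\<lambda>j. \<Sum>a\<in>A - B. int (n a) * a j) \<in> bounded_combinations (A - B) (K i)"
    using gap_decomposition[OF A K] by blast
  define q where "q = (\<lambda>j. \<Sum>a\<in>A - B. int (n a) * a j)"
  have x_split: "x = (\<lambda>j. (\<Sum>a\<in>B. int (n a) * a j) + q j)"
    unfolding n q_def by (simp add: fun_eq_iff sum.subset_diff[OF B(1) A] add.commute)
  have "(\<lambda>j. (\<Sum>a\<in>B. int (n a) * a j) + (q j - m j)) \<notin> nat_span A"
    using hole unfolding x_split by (simp add: algebra_simps)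
  then have "(\<lambda>j. q j - m j) \<notin> rat_span_lattice (face B)"
    using large[OF B(1) q[folded q_def] _ B(2)] by blast
  moreover have "vdot W (rat_vec x) = vdot W (rat_vec q)" if "\<forall>a\<in>face B. vdot W (rat_vec a) = 0" for W
    using that face[OF B(1)] unfolding x_split vdot_rat_vec_add vdot_rat_vec_sum
    by (auto intro!: sum.neutral)
  ultimately show ?thesis
    using that i B(1) q unfolding q_def by blast
qed

lemma holes_on_finitely_many_hyperplanes:
  fixes A :: "('n::finite \<Rightarrow> int) set"
  assumes A: "finite A" and saturated: "\<And>F. rat_face A F \<Longrightarrow> rat_span_lattice F = int_span F"
  shows "\<exists>H. finite H \<and> (\<forall>(W, r)\<in>H. vdot W (rat_vec m) \<noteq> r) \<and>
    (\<forall>x\<in>nat_span A. (\<lambda>i. x i - m i) \<notin> nat_span A \<longrightarrow> (\<exists>(W, r)\<in>H. vdot W (rat_vec x) = r))"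
proof -
  have "\<forall>B. \<exists>F. B \<subseteq> A \<longrightarrow> smallest_face A B F"
    using smallest_face_exists by blast
  from choice[OF this] obtain face where "\<forall>B. B \<subseteq> A \<longrightarrow> smallest_face A B (face B)" ..
  then have face: "\<And>B. B \<subseteq> A \<Longrightarrow> smallest_face A B (face B)"
    by blast
  obtain K where K: "mono K" and large:
    "\<And>i B q n. B \<subseteq> A \<Longrightarrow> q \<in> bounded_combinations (A - B) (K i) \<Longrightarrow>
      (\<lambda>j. q j - m j) \<in> rat_span_lattice (face B) \<Longrightarrow> \<forall>a\<in>B. K (Suc i) \<le> n a \<Longrightarrow>
      (\<lambda>j. (\<Sum>a\<in>B. int (n a) * a j) + (q j - m j)) \<in> nat_span A"
    using threshold_sequence[OF A saturated face, of m] by blast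
  define Idx where "Idx = {(i, B, q). i \<le> card A \<and> B \<subseteq> A \<and> q \<in> bounded_combinations (A - B) (K i) \<and>
    (\<lambda>j. q j - m j) \<notin> rat_span_lattice (face B)}"
  have "Idx \<subseteq> Sigma {..card A} (\<lambda>i. Sigma (Pow A) (\<lambda>B. bounded_combinations (A - B) (K i)))"
    unfolding Idx_def by auto
  moreover have "finite (Sigma {..card A} (\<lambda>i. Sigma (Pow A) (\<lambda>B. bounded_combinations (A - B) (K i))))"
    using A by (intro finite_SigmaI finite_bounded_combinations) auto
  ultimately have "finite Idx"
    by (rule finite_subset)
  obtain W where W0: "\<And>\<iota>. \<iota> \<in> Idx \<Longrightarrow> \<forall>a\<in>face (fst (snd \<iota>)). vdot (W \<iota>) (rat_vec a) = 0"
    and W1: "\<And>\<iota>. \<iota> \<in> Idx \<Longrightarrow> vdot (W \<iota>) (rat_vec (\<lambda>j. snd (snd \<iota>) j - m j)) \<noteq> 0"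
    by (rule rat_span_lattice_separating_functionals[of Idx "\<lambda>\<iota>. face (fst (snd \<iota>))" "\<lambda>\<iota> j. snd (snd \<iota>) j - m j"])
      (auto simp: Idx_def intro: finite_subset[OF smallest_face_subset(1)[OF face] A])
  have W: "\<And>i B q. (i, B, q) \<in> Idx \<Longrightarrow> \<forall>a\<in>face B. vdot (W (i, B, q)) (rat_vec a) = 0"
    "\<And>\<iota>. \<iota> \<in> Idx \<Longrightarrow> vdot (W \<iota>) (rat_vec (snd (snd \<iota>))) \<noteq> vdot (W \<iota>) (rat_vec m)"
    using W0 W1 by (fastforce simp: vdot_rat_vec_diff)+
  define H where "H = (\<lambda>\<iota>. (W \<iota>, vdot (W \<iota>) (rat_vec (snd (snd \<iota>))))) ` Idx"
  have "\<exists>(W', r)\<in>H. vdot W' (rat_vec x) = r"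
    if x: "x \<in> nat_span A" and hole: "(\<lambda>i. x i - m i) \<notin> nat_span A" for x
  proof -
    obtain i B q where "i \<le> card A" "B \<subseteq> A" "q \<in> bounded_combinations (A - B) (K i)"
      "(\<lambda>j. q j - m j) \<notin> rat_span_lattice (face B)"
      and on_level: "\<forall>W. (\<forall>a\<in>face B. vdot W (rat_vec a) = 0) \<longrightarrow> vdot W (rat_vec x) = vdot W (rat_vec q)"
      by (rule hole_decomposition[OF A K smallest_face_subset(2)[OF face] large x hole])
    then have \<iota>: "(i, B, q) \<in> Idx"
      unfolding Idx_def by simp
    then have "(W (i, B, q), vdot (W (i, B, q)) (rat_vec q)) \<in> H"
      unfolding H_def by (auto intro: rev_image_eqI)
    moreover have "vdot (W (i, B, q)) (rat_vec x) = vdot (W (i, B, q)) (rat_vec q)"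
      using on_level W(1)[OF \<iota>] by blast
    ultimately show ?thesis
      by blast
  qed
  moreover have "\<forall>(W', r)\<in>H. vdot W' (rat_vec m) \<noteq> r"
    using W(2) unfolding H_def by force
  ultimately show ?thesis
    using \<open>finite Idx\<close> unfolding H_def by blast
qed

lemma separating_ffact_poly:
  fixes H :: "(('n::finite \<Rightarrow> rat) \<times> rat) set"
  assumes H: "finite H" and avoid: "\<forall>(W, r)\<in>H. vdot W (rat_vec m) \<noteq> r"
  shows "\<exists>\<phi>. ffact_poly \<phi> \<and> \<phi> m \<noteq> 0 \<and> (\<forall>x. (\<exists>(W, r)\<in>H. vdot W (rat_vec x) = r) \<longrightarrow> \<phi> x = 0)"
proof -
  define \<phi> where "\<phi> x = (\<Prod>h\<in>H. - of_rat (snd h) + (\<Sum>j\<in>UNIV. of_rat (fst h j) * of_int (x j)) :: complex)"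
    for x
  have factor: "- of_rat (snd h) + (\<Sum>j\<in>UNIV. of_rat (fst h j) * of_int (x j)) =
      (of_rat (vdot (fst h) (rat_vec x) - snd h) :: complex)" for h x
    by (simp add: vdot_def rat_vec_def of_rat_sum of_rat_mult of_rat_diff)
  have "ffact_poly \<phi>"
    unfolding \<phi>_def using ffact_poly_prod_affine[OF H] .
  moreover have "\<phi> m \<noteq> 0"
    unfolding \<phi>_def factor using H avoid by auto
  moreover have "\<phi> x = 0" if on_H: "\<exists>(W, r)\<in>H. vdot W (rat_vec x) = r" for x
  proof -
    obtain W r where "(W, r) \<in> H" "vdot W (rat_vec x) = r"
      using on_H by blast
    then show ?thesis
      unfolding \<phi>_def factor using H by (auto intro!: bexI[of _ "(W, r)"])
  qed
  ultimately show ?thesis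
    by blast
qed

section \<open>Operators from separating polynomials\<close>

definition mult_op :: "(('n \<Rightarrow> int) \<Rightarrow> complex) \<Rightarrow> ('n \<Rightarrow> int) \<times> ('n \<Rightarrow> nat) \<Rightarrow> complex" where
  "mult_op h = (\<lambda>p. if snd p = (\<lambda>_. 0) then h (fst p) else 0)"

lemma mult_op_in_diff_ops_RA:
  assumes h: "h \<in> semigroup_ring A"
  shows "mult_op h \<in> diff_ops_RA A"
proof -
  have "{p. mult_op h p \<noteq> 0} \<subseteq> (\<lambda>a. (a, \<lambda>_. 0)) ` {a. h a \<noteq> 0}"
    unfolding mult_op_def by (auto split: if_splits intro!: image_eqI[where x="fst _"])
  then have fin: "mult_op h \<in> diff_ops"
    using h unfolding diff_ops_def semigroup_ring_iff by (auto intro: finite_subset)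
  have "op_act (mult_op h) f \<in> semigroup_ring A" if f: "f \<in> semigroup_ring A" for f
  proof -
    have "op_act (mult_op h) f \<in> laurent"
      using op_act_in_laurent[OF fin] f unfolding semigroup_ring_def by blast
    moreover have "y \<in> nat_span A" if y: "op_act (mult_op h) f y \<noteq> 0" for y
    proof -
      obtain p u where pu: "mult_op h p \<noteq> 0" "f u \<noteq> 0" "y = (\<lambda>i. fst p i + u i - int (snd p i))"
        using op_act_nonzeroD[OF y] by blast
      then have "snd p = (\<lambda>_. 0)" "h (fst p) \<noteq> 0"
        unfolding mult_op_def by (auto split: if_splits)
      then show ?thesis
        using pu h f nat_span_add[of "fst p" A u] unfolding semigroup_ring_iff by auto
    qed
    ultimately show ?thesis
      unfolding semigroup_ring_def by blast
  qed
  with fin show ?thesis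
    unfolding diff_ops_RA_def by blast
qed

lemma op_act_mult_op_const:
  assumes h: "h \<in> semigroup_ring A" and \<kappa>: "\<kappa> \<noteq> 0"
  shows "op_act (mult_op h) (\<lambda>x. if x = (\<lambda>_. 0) then \<kappa> else 0) = (\<lambda>y. \<kappa> * h y)"
proof
  fix y
  have fin: "finite {p. mult_op h p \<noteq> 0}"
    using mult_op_in_diff_ops_RA[OF h] by (rule diff_ops_RA_finite_support)
  have support: "{u. (if u = (\<lambda>_. 0::int) then \<kappa> else 0) \<noteq> 0} = {\<lambda>_. 0}"
    using \<kappa> by auto
  have "op_act (mult_op h) (\<lambda>x. if x = (\<lambda>_. 0) then \<kappa> else 0) y = \<kappa> * (\<Sum>p | mult_op h p \<noteq> 0.
      if p = (y, \<lambda>_. 0) then mult_op h p else 0)"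
    unfolding op_act_eq support
    by (auto simp: mult_op_def ffact_vec_zero split: if_splits intro!: sum.cong)
  also have "\<dots> = \<kappa> * h y"
    using fin by (simp add: sum.delta' mult_op_def)
  finally show "op_act (mult_op h) (\<lambda>x. if x = (\<lambda>_. 0) then \<kappa> else 0) y = \<kappa> * h y" .
qed

text \<open>The operator \<open>\<Sum>\<^sub>b\<^sub>\<in>\<^sub>B\<^sub>s c\<^sub>b t\<^sup>b\<^sup>-\<^sup>m \<partial>\<^sup>b\<close>, which maps \<open>t\<^sup>x\<close> to \<open>(\<Sum>\<^sub>b c\<^sub>b x\<^sup>\<underline>b) t\<^sup>x\<^sup>-\<^sup>m\<close>.\<close>
definition shift_op :: "('n \<Rightarrow> nat) set \<Rightarrow> (('n \<Rightarrow> nat) \<Rightarrow> complex) \<Rightarrow> ('n \<Rightarrow> int) \<Rightarrow>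
    ('n \<Rightarrow> int) \<times> ('n \<Rightarrow> nat) \<Rightarrow> complex" where
  "shift_op Bs c m = (\<lambda>p. if snd p \<in> Bs \<and> fst p = (\<lambda>i. int (snd p i) - m i) then c (snd p) else 0)"

lemma shift_op_in_diff_ops:
  assumes "finite Bs"
  shows "shift_op Bs c m \<in> diff_ops"
proof -
  have "{p. shift_op Bs c m p \<noteq> 0} \<subseteq> (\<lambda>b. ((\<lambda>i. int (b i) - m i), b)) ` Bs"
    unfolding shift_op_def by (auto split: if_splits)
  then show ?thesis
    unfolding diff_ops_def using assms finite_surj by blast
qed

lemma shift_op_symbol:
  fixes m :: "'n::finite \<Rightarrow> int"
  assumes Bs: "finite Bs"
  shows "(\<Sum>p | shift_op Bs c m p \<noteq> 0. shift_op Bs c m p * of_int (ffact_vec u (snd p))) =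
    (\<Sum>b\<in>Bs. c b * of_int (ffact_vec u b))"
proof -
  define emb where "emb b = ((\<lambda>i. int (b i) - m i), b)" for b :: "'n \<Rightarrow> nat"
  have support: "{p. shift_op Bs c m p \<noteq> 0} = emb ` {b\<in>Bs. c b \<noteq> 0}"
    unfolding shift_op_def emb_def by (auto split: if_splits)
  have "inj emb"
    unfolding emb_def by (auto simp: inj_on_def)
  have "(\<Sum>p | shift_op Bs c m p \<noteq> 0. shift_op Bs c m p * of_int (ffact_vec u (snd p))) =
      (\<Sum>b | b \<in> Bs \<and> c b \<noteq> 0. shift_op Bs c m (emb b) * of_int (ffact_vec u (snd (emb b))))"
    unfolding support by (rule sum.reindex[unfolded comp_def]) (rule inj_on_subset[OF \<open>inj emb\<close>], simp)
  also have "\<dots> = (\<Sum>b | b \<in> Bs \<and> c b \<noteq> 0. c b * of_int (ffact_vec u b))"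
    by (intro sum.cong) (auto simp: shift_op_def emb_def)
  also have "\<dots> = (\<Sum>b\<in>Bs. c b * of_int (ffact_vec u b))"
    using Bs by (intro sum.mono_neutral_left) auto
  finally show ?thesis .
qed

lemma op_act_shift_op:
  fixes m :: "'n::finite \<Rightarrow> int"
  assumes Bs: "finite Bs" and f: "finite {u. f u \<noteq> 0}"
  shows "op_act (shift_op Bs c m) f y =
    f (\<lambda>i. y i + m i) * (\<Sum>b\<in>Bs. c b * of_int (ffact_vec (\<lambda>i. y i + m i) b))"
proof -
  let ?P = "shift_op Bs c m"
  have shift: "(\<lambda>i. fst p i + u i - int (snd p i)) = y \<longleftrightarrow> u = (\<lambda>i. y i + m i)"
    if "?P p \<noteq> 0" for p u
  proof -
    have "fst p = (\<lambda>i. int (snd p i) - m i)"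
      using that unfolding shift_op_def by (auto split: if_splits)
    then show ?thesis
      by (auto simp: fun_eq_iff diff_eq_eq)
  qed
  have inner: "(\<Sum>p | ?P p \<noteq> 0. if (\<lambda>i. fst p i + u i - int (snd p i)) = y
      then ?P p * of_int (ffact_vec u (snd p)) else 0) =
    (if u = (\<lambda>i. y i + m i) then \<Sum>b\<in>Bs. c b * of_int (ffact_vec u b) else 0)" for u
  proof -
    have "(\<Sum>p | ?P p \<noteq> 0. if (\<lambda>i. fst p i + u i - int (snd p i)) = y
        then ?P p * of_int (ffact_vec u (snd p)) else 0) =
      (\<Sum>p | ?P p \<noteq> 0. if u = (\<lambda>i. y i + m i) then ?P p * of_int (ffact_vec u (snd p)) else 0)"
      by (intro sum.cong refl) (simp add: shift)
    then show ?thesis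
      by (simp add: shift_op_symbol[OF Bs])
  qed
  have "op_act ?P f y = (\<Sum>u | f u \<noteq> 0. if u = (\<lambda>i. y i + m i) then
      f u * (\<Sum>b\<in>Bs. c b * of_int (ffact_vec u b)) else 0)"
    unfolding op_act_eq inner by (intro sum.cong) simp_all
  also have "\<dots> = f (\<lambda>i. y i + m i) * (\<Sum>b\<in>Bs. c b * of_int (ffact_vec (\<lambda>i. y i + m i) b))"
    using f by (simp add: sum.delta')
  finally show ?thesis .
qed

lemma graded_submodule_eq_if_const:
  assumes M: "graded_submodule A M" and \<kappa>: "\<kappa> \<noteq> 0"
    and const: "(\<lambda>x. if x = (\<lambda>_. 0) then \<kappa> else 0) \<in> M"
  shows "M = semigroup_ring A"
proof
  show "M \<subseteq> semigroup_ring A"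
    using M unfolding graded_submodule_def by blast
  show "semigroup_ring A \<subseteq> M"
  proof
    fix h
    assume "h \<in> semigroup_ring A"
    then have h: "(\<lambda>a. h a / \<kappa>) \<in> semigroup_ring A"
      using \<kappa> unfolding semigroup_ring_iff by simp
    have "op_act (mult_op (\<lambda>a. h a / \<kappa>)) (\<lambda>x. if x = (\<lambda>_. 0) then \<kappa> else 0) \<in> M"
      using M mult_op_in_diff_ops_RA[OF h] const unfolding graded_submodule_def by blast
    then show "h \<in> M"
      unfolding op_act_mult_op_const[OF h \<kappa>] using \<kappa> by simp
  qed
qed

text \<open>Given \<open>\<phi>\<close>, the operator \<open>t\<^sup>-\<^sup>m \<phi>(\<theta>)\<close> lies in \<open>D(R\<^sub>A)\<close> and maps \<open>t\<^sup>m\<close> to \<open>\<phi>(m)\<close>.\<close>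
lemma graded_submodule_contains_const:
  assumes sep: "\<exists>\<phi>. ffact_poly \<phi> \<and> \<phi> m \<noteq> 0 \<and> (\<forall>x\<in>nat_span A. (\<lambda>i. x i - m i) \<notin> nat_span A \<longrightarrow> \<phi> x = 0)"
    and M: "graded_submodule A M" and f: "f \<in> M" "f m \<noteq> 0"
  shows "\<exists>\<kappa>. \<kappa> \<noteq> 0 \<and> (\<lambda>x. if x = (\<lambda>_. 0) then \<kappa> else 0) \<in> M"
proof -
  obtain \<phi> where \<phi>: "ffact_poly \<phi>" "\<phi> m \<noteq> 0"
    and vanish: "\<And>x. x \<in> nat_span A \<Longrightarrow> (\<lambda>i. x i - m i) \<notin> nat_span A \<Longrightarrow> \<phi> x = 0"
    using sep by blast
  then obtain Bs c where Bs: "finite Bs" and \<phi>_eq: "\<phi> = (\<lambda>x. \<Sum>b\<in>Bs. c b * of_int (ffact_vec x b))"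
    unfolding ffact_poly_def by blast
  let ?P = "shift_op Bs c m"
  have act: "op_act ?P h y = h (\<lambda>i. y i + m i) * \<phi> (\<lambda>i. y i + m i)" if "finite {u. h u \<noteq> 0}" for h y
    unfolding \<phi>_eq using op_act_shift_op[OF Bs that] .
  have "op_act ?P h \<in> semigroup_ring A" if h: "h \<in> semigroup_ring A" for h
  proof -
    have "y \<in> nat_span A" if y: "op_act ?P h y \<noteq> 0" for y
    proof -
      have "h (\<lambda>i. y i + m i) \<noteq> 0" "\<phi> (\<lambda>i. y i + m i) \<noteq> 0"
        using y act h unfolding semigroup_ring_iff by auto
      then show ?thesis
        using vanish[of "\<lambda>i. y i + m i"] h unfolding semigroup_ring_iff by auto
    qed
    moreover have "op_act ?P h \<in> laurent"
      using op_act_in_laurent[OF shift_op_in_diff_ops[OF Bs]] h unfolding semigroup_ring_def by blast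
    ultimately show ?thesis
      unfolding semigroup_ring_def by blast
  qed
  then have P: "?P \<in> diff_ops_RA A"
    unfolding diff_ops_RA_def using shift_op_in_diff_ops[OF Bs] by blast
  define g where "g = (\<lambda>x. if x = m then f m else 0)"
  have "finite {u. g u \<noteq> 0}"
    unfolding g_def by (rule finite_subset[of _ "{m}"]) auto
  then have "op_act ?P g = (\<lambda>x. if x = (\<lambda>_. 0) then f m * \<phi> m else 0)"
    by (auto simp: act g_def fun_eq_iff)
  moreover have "op_act ?P g \<in> M"
    using M f(1) P unfolding graded_submodule_def g_def by blast
  ultimately show ?thesis
    using f(2) \<phi>(2) by (intro exI[of _ "f m * \<phi> m"]) auto
qed

lemma graded_simple_if_separating_ffact_polys:
  assumes sep: "\<And>m. m \<in> nat_span A \<Longrightarrow>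
    \<exists>\<phi>. ffact_poly \<phi> \<and> \<phi> m \<noteq> 0 \<and> (\<forall>x\<in>nat_span A. (\<lambda>i. x i - m i) \<notin> nat_span A \<longrightarrow> \<phi> x = 0)"
  shows "graded_simple A"
  unfolding graded_simple_def
proof (intro conjI allI impI)
  have "laurent_monom (\<lambda>_. 0) \<in> semigroup_ring A"
    by (rule laurent_monom_in_semigroup_ring[OF nat_span_zero])
  then show "semigroup_ring A \<noteq> {\<lambda>_. 0}"
    using laurent_monom_nonzero by auto
next
  fix M
  assume M: "graded_submodule A M"
  show "M = {\<lambda>_. 0} \<or> M = semigroup_ring A"
  proof (cases "M \<subseteq> {\<lambda>_. 0}")
    case True
    then show ?thesis
      using M unfolding graded_submodule_def by blast
  next
    case False
    then obtain f m where f: "f \<in> M" "f m \<noteq> 0"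
      by auto
    have "f \<in> semigroup_ring A"
      using M f(1) unfolding graded_submodule_def by blast
    then have "m \<in> nat_span A"
      using f(2) unfolding semigroup_ring_iff by blast
    then obtain \<kappa> where "\<kappa> \<noteq> 0" "(\<lambda>x. if x = (\<lambda>_. 0) then \<kappa> else 0) \<in> M"
      using graded_submodule_contains_const[OF sep M f] by blast
    then show ?thesis
      using graded_submodule_eq_if_const[OF M] by blast
  qed
qed

lemma faces_saturated_if_graded_simple:
  fixes A :: "('n::finite \<Rightarrow> int) set"
  assumes A: "finite A" "int_span A = UNIV" and simple: "graded_simple A"
    and \<tau>: "is_face (real_cone A) \<tau>"
  shows "rat_span_lattice {a\<in>A. real_pt a \<in> \<tau>} = int_span {a\<in>A. real_pt a \<in> \<tau>}"
proof -
  obtain w where w: "\<forall>a\<in>A. 0 \<le> vdot w (real_pt a)"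
    and points: "{a\<in>A. real_pt a \<in> \<tau>} = {a\<in>A. vdot w (real_pt a) = 0}"
    using real_face_points[OF A(1) \<tau>] by blast
  show ?thesis
    unfolding points using not_graded_simple_if_face_unsaturated[OF A w] simple by blast
qed

lemma graded_simple_if_faces_saturated:
  fixes A :: "('n::finite \<Rightarrow> int) set"
  assumes A: "finite A" and faces: "\<And>\<tau>. is_face (real_cone A) \<tau> \<Longrightarrow>
      rat_span_lattice {a\<in>A. real_pt a \<in> \<tau>} = int_span {a\<in>A. real_pt a \<in> \<tau>}"
  shows "graded_simple A"
proof (rule graded_simple_if_separating_ffact_polys)
  have saturated: "rat_span_lattice F = int_span F" if F: "rat_face A F" for F
  proof -
    obtain \<tau> where "is_face (real_cone A) \<tau>" "{a\<in>A. real_pt a \<in> \<tau>} = F"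
      using rat_face_real_face[OF A F] .
    then show ?thesis
      using faces by blast
  qed
  fix m
  obtain H where "finite H" "\<forall>(W, r)\<in>H. vdot W (rat_vec m) \<noteq> r"
    and holes: "\<forall>x\<in>nat_span A. (\<lambda>i. x i - m i) \<notin> nat_span A \<longrightarrow> (\<exists>(W, r)\<in>H. vdot W (rat_vec x) = r)"
    using holes_on_finitely_many_hyperplanes[OF A saturated, where m = m] by blast
  then obtain \<phi> where "ffact_poly \<phi>" "\<phi> m \<noteq> 0"
    and vanish: "\<forall>x. (\<exists>(W, r)\<in>H. vdot W (rat_vec x) = r) \<longrightarrow> \<phi> x = 0"
    using separating_ffact_poly[of H m] by blast
  then show "\<exists>\<phi>. ffact_poly \<phi> \<and> \<phi> m \<noteq> 0 \<and>
      (\<forall>x\<in>nat_span A. (\<lambda>i. x i - m i) \<notin> nat_span A \<longrightarrow> \<phi> x = 0)"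
    using holes vanish by (intro exI[of _ \<phi>]) blast
qed

theorem proposition8p10:
  fixes A :: "('n::finite \<Rightarrow> int) set"
  assumes "finite A"
    and "int_span A = UNIV"
  shows "graded_simple A \<longleftrightarrow>
    (\<forall>\<tau>. is_face (real_cone A) \<tau> \<longrightarrow>
       rat_span_lattice {a\<in>A. real_pt a \<in> \<tau>} = int_span {a\<in>A. real_pt a \<in> \<tau>})"
  using faces_saturated_if_graded_simple[OF assms] graded_simple_if_faces_saturated[OF assms(1)]
  by blast

end
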